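(* Fix $\lambda>0$. For a suitable constant $C$, the algorithm Approx-Partition-Function$(\lambda,\epsilon)$ is an $\epsilon n$-approximation algorithm for $\log Z(G,\lambda)$ on graphs $G$ with $n$ vertices and maximum degree at most $\Delta$, and its query complexity is $\tilde{O}\left((1/\epsilon)^{\tilde{O}(\sqrt{\Delta})}\right)$.
   Context: Let $G=(V,E)$ be a finite undirected graph with $n$ vertices and maximum degree at most $\Delta$ (parallel edges and self-loops allowed); $Z(G,\lambda)=\sum_{M}\lambda^{|M|}$ over matchings $M$ of $G$, $\pi_{G,\lambda}(M)=\lambda^{|M|}/Z(G,\lambda)$, and $p_{H,\lambda}(v)$ is the Gibbs probability that $v$ is uncovered in graph $H$. Access is via oracles $\mathcal{D}(u)$ (degree) and $\mathcal{N}(u,i)$ ($i$-th neighbor); query complexity counts oracle calls. An $\epsilon n$-approximation algorithm for a graph quantity $X$ outputs, for every input graph, a value $\widehat X$ with $|\widehat X-X|\le\epsilon n$ with probability at least $2/3$. The algorithm: fix a uniformly random total order $\succ$ on $V$ (by assigning i.i.d. uniform $[0,1]$ labels lazily to visited vertices), and let $G_v$ be the subgraph induced by $\{u:u\succeq v\}$. Let $s=\lceil C/\epsilon^2\rceil$ and sample a multiset $U$ of $s$ vertices uniformly and independently. For each $u\in U$ compute an estimate $\widehat p_u$ of $p_{G_u,\lambda}(u)$ by the following procedure on $G_u$: for $h=1,2,\dots$ compute $x^h_u(u)$, the root value of the solution of $x_w=(1+\lambda\sum_{w'\text{ child of }w}x_{w'})^{-1}$ on the depth-$h$ truncation of the tree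 of simple paths in $G_u$ starting at $u$ (explored by depth-first search with the oracles), stopping at the first $h\ge2$ with $|\log x^h_u(u)-\log x^{h-1}_u(u)|\le\epsilon/(2e)$, and set $\widehat p_u=x^h_u(u)$. Output $(n/s)\sum_{u\in U}-\log\widehat p_u$. $\tilde{O}$ hides polylogarithmic factors, with $\Delta$ treated as a constant. *)

theory Defs
  imports "HOL-Probability.Probability" "HOL-Combinatorics.Permutations"
begin

text \<open>The degree oracle is D(u) = length (adj u), the neighbour oracle is
  N(u,i) = adj u ! i.  Parallel edges are repeated entries; a self-loop at u
  is an occurrence of u in adj u.\<close>

definition mult :: "(nat \<Rightarrow> nat list) \<Rightarrow> nat \<Rightarrow> nat \<Rightarrow> nat" where
  "mult adj u v = count (mset (adj u)) v"

definition multigraph :: "nat \<Rightarrow> (nat \<Rightarrow> nat list) \<Rightarrow> bool" where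
  "multigraph n adj \<longleftrightarrow>
     (\<forall>u<n. set (adj u) \<subseteq> {..<n}) \<and>
     (\<forall>u<n. \<forall>v<n. u \<noteq> v \<longrightarrow> mult adj u v = mult adj v u)"

definition max_degree_le :: "nat \<Rightarrow> (nat \<Rightarrow> nat list) \<Rightarrow> nat \<Rightarrow> bool" where
  "max_degree_le n adj \<Delta> \<longleftrightarrow> (\<forall>u<n. length (adj u) \<le> \<Delta>)"

text \<open>Non-loop edges: the j-th parallel copy of the edge {u,v}, u < v.\<close>
definition edges :: "nat \<Rightarrow> (nat \<Rightarrow> nat list) \<Rightarrow> (nat \<times> nat \<times> nat) set" where
  "edges n adj = {(u, v, j). u < v \<and> v < n \<and> j < mult adj u v}"

definition ends :: "nat \<times> nat \<times> nat \<Rightarrow> nat set" where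
  "ends e = {fst e, fst (snd e)}"

definition is_matching :: "nat \<Rightarrow> (nat \<Rightarrow> nat list) \<Rightarrow> (nat \<times> nat \<times> nat) set \<Rightarrow> bool" where
  "is_matching n adj M \<longleftrightarrow> M \<subseteq> edges n adj \<and>
     (\<forall>e\<in>M. \<forall>e'\<in>M. e \<noteq> e' \<longrightarrow> ends e \<inter> ends e' = {})"

definition Z :: "nat \<Rightarrow> (nat \<Rightarrow> nat list) \<Rightarrow> real \<Rightarrow> real" where
  "Z n adj lam = (\<Sum>M\<in>{M. is_matching n adj M}. lam ^ card M)"

text \<open>tree_val lam adj inG h pth w: value at the node w (end of the simple pth
  pth, which contains w) of the depth-h truncation of the tree of simple paths
  in the subgraph induced by {v. inG v}, together with the number of oracle
  queries made by the depth-first exploration: D(w) and N(w,i) for all i at each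
  non-leaf node; leaves (remaining depth 0) have value 1 and cost no query.\<close>

fun tree_val :: "real \<Rightarrow> (nat \<Rightarrow> nat list) \<Rightarrow> (nat \<Rightarrow> bool) \<Rightarrow> nat \<Rightarrow> nat list \<Rightarrow> nat \<Rightarrow> real \<times> nat" where
  "tree_val lam adj inG 0 pth w = (1, 0)"
| "tree_val lam adj inG (Suc h) pth w =
     (let rs = map (\<lambda>w'. tree_val lam adj inG h (w' # pth) w')
                 (filter (\<lambda>w'. inG w' \<and> w' \<notin> set pth) (adj w))
      in (1 / (1 + lam * sum_list (map fst rs)),
          1 + length (adj w) + sum_list (map snd rs)))"

text \<open>sigma is the random total order, given as a rank permutation of {..<n}:
  v \<succeq> u iff sigma v \<ge> sigma u.  G_u is induced by {v. sigma v \<ge> sigma u}.\<close>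

definition xval :: "real \<Rightarrow> (nat \<Rightarrow> nat list) \<Rightarrow> (nat \<Rightarrow> nat) \<Rightarrow> nat \<Rightarrow> nat \<Rightarrow> real \<times> nat" where
  "xval lam adj \<sigma> u h = tree_val lam adj (\<lambda>v. \<sigma> v \<ge> \<sigma> u) h [u] u"

definition stop_cond :: "real \<Rightarrow> real \<Rightarrow> (nat \<Rightarrow> nat list) \<Rightarrow> (nat \<Rightarrow> nat) \<Rightarrow> nat \<Rightarrow> nat \<Rightarrow> bool" where
  "stop_cond lam \<epsilon> adj \<sigma> u h \<longleftrightarrow> h \<ge> 2 \<and>
     \<bar>ln (fst (xval lam adj \<sigma> u h)) - ln (fst (xval lam adj \<sigma> u (h - 1)))\<bar> \<le> \<epsilon> / (2 * exp 1)"

text \<open>Estimate of p for vertex u (arbitrary value 1 if the loop never stops).\<close>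
definition p_est :: "real \<Rightarrow> real \<Rightarrow> (nat \<Rightarrow> nat list) \<Rightarrow> (nat \<Rightarrow> nat) \<Rightarrow> nat \<Rightarrow> real" where
  "p_est lam \<epsilon> adj \<sigma> u =
     (if \<exists>h. stop_cond lam \<epsilon> adj \<sigma> u h
      then fst (xval lam adj \<sigma> u (LEAST h. stop_cond lam \<epsilon> adj \<sigma> u h)) else 1)"

definition queries_u :: "real \<Rightarrow> real \<Rightarrow> (nat \<Rightarrow> nat list) \<Rightarrow> (nat \<Rightarrow> nat) \<Rightarrow> nat \<Rightarrow> enat" where
  "queries_u lam \<epsilon> adj \<sigma> u =
     (if \<exists>h. stop_cond lam \<epsilon> adj \<sigma> u h
      then enat (\<Sum>h\<in>{1..(LEAST h. stop_cond lam \<epsilon> adj \<sigma> u h)}. snd (xval lam adj \<sigma> u h))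
      else \<infinity>)"

definition num_samples :: "real \<Rightarrow> real \<Rightarrow> nat" where
  "num_samples C \<epsilon> = nat \<lceil>C / \<epsilon>\<^sup>2\<rceil>"

definition apf_output :: "real \<Rightarrow> real \<Rightarrow> real \<Rightarrow> nat \<Rightarrow> (nat \<Rightarrow> nat list) \<Rightarrow> (nat \<Rightarrow> nat) \<Rightarrow> nat list \<Rightarrow> real" where
  "apf_output lam \<epsilon> C n adj \<sigma> U =
     real n / real (num_samples C \<epsilon>) * sum_list (map (\<lambda>u. - ln (p_est lam \<epsilon> adj \<sigma> u)) U)"

definition apf_queries :: "real \<Rightarrow> real \<Rightarrow> (nat \<Rightarrow> nat list) \<Rightarrow> (nat \<Rightarrow> nat) \<Rightarrow> nat list \<Rightarrow> enat" where
  "apf_queries lam \<epsilon> adj \<sigma> U = sum_list (map (queries_u lam \<epsilon> adj \<sigma>) U)"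

text \<open>Randomness: a uniformly random rank permutation (same law as the order
  induced by i.i.d. uniform labels) and an independent uniform list of s vertices
  (= s i.i.d. uniform vertices).\<close>
definition order_pmf :: "nat \<Rightarrow> (nat \<Rightarrow> nat) pmf" where
  "order_pmf n = pmf_of_set {\<sigma>. \<sigma> permutes {..<n}}"

definition sample_pmf :: "nat \<Rightarrow> nat \<Rightarrow> nat list pmf" where
  "sample_pmf n s = pmf_of_set {U. length U = s \<and> set U \<subseteq> {..<n}}"

definition apf_run :: "real \<Rightarrow> real \<Rightarrow> real \<Rightarrow> nat \<Rightarrow> ((nat \<Rightarrow> nat) \<times> nat list) pmf" where
  "apf_run lam \<epsilon> C n = pair_pmf (order_pmf n) (sample_pmf n (num_samples C \<epsilon>))"

end

theory Submission
  imports Defs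
begin

(*
  Ordering the vertices by the random rank \<sigma>, ln Z(G) telescopes into the sum over u of
  -ln p(u), where p(u) = Z(G_u - u) / Z(G_u) is the probability that u is uncovered in G_u; the
  output is n times a sample mean of estimates of these terms, each in [0, ln (1 + lam * \<Delta>)],
  so C / \<epsilon>\<^sup>2 samples give accuracy \<epsilon> n / 2 with probability 2/3 by Chebyshev's inequality.

  Along the tree of simple paths, p(u) satisfies the recursion x = 1 / (1 + lam * \<Sigma> x_child)
  (vertex recursion of the matching partition function), and x^h is its depth-h truncation.
  The truncations alternate around p(u), so the stopping rule certifies an error of at most
  \<epsilon> / (2e).  Two levels of the recursion contract logarithmic errors by the factor
  1 - 1 / (1 + sqrt (lam * \<Delta>)): in logarithmic coordinates the two-level map has derivative
  -lam \<Sigma> Q(1 - Q) / (1 + lam \<Sigma> Q), which Cauchy-Schwarz bounds by that factor.  Hence the rule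
  fires by depth H = O(sqrt (lam * \<Delta>) ln (1/\<epsilon>)), and the exploration of a depth-H tree
  of degree \<le> \<Delta> costs at most (\<Delta> + 2)^H queries.
*)

definition contraction_rate :: "real \<Rightarrow> nat \<Rightarrow> real" where
  "contraction_rate lam d = 1 - 1 / (1 + sqrt (lam * d))"

lemma contraction_rate_bounds:
  assumes "lam \<ge> 0"
  shows "0 \<le> contraction_rate lam d \<and> contraction_rate lam d \<le> 1"
  using assms by (simp add: contraction_rate_def divide_le_eq add_pos_nonneg)

lemma contraction_factor_bound:
  fixes lam S T :: real and d :: nat
  assumes lam: "lam > 0" and S: "S \<ge> 0" and T: "T \<ge> 0" and CS: "S\<^sup>2 \<le> real d * T"
  shows "lam * (S - T) \<le> contraction_rate lam d * (1 + lam * S)"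
proof (cases "d = 0")
  case True
  then have "S = 0" using CS S by simp
  then show ?thesis using True lam T by (simp add: contraction_rate_def)
next
  case False
  define t where "t = sqrt (lam * d)"
  define u where "u = lam * S"
  have t: "t > 0" and tt: "t\<^sup>2 = lam * d" using False lam by (simp_all add: t_def)
  have u: "u \<ge> 0" using lam S by (simp add: u_def)
  have "u\<^sup>2 / t\<^sup>2 = lam * (S\<^sup>2 / d)"
    unfolding tt u_def power_mult_distrib using lam by (simp add: power2_eq_square)
  also have "\<dots> \<le> lam * T"
    using CS False lam by (intro mult_left_mono) (simp_all add: divide_le_eq mult.commute)
  finally have quot: "u\<^sup>2 / t\<^sup>2 \<le> lam * T" .
  \<comment> \<open>\<open>(1 + u) \<le> (1 + t)(1 + u\<^sup>2/t\<^sup>2)\<close> is AM-GM in the form \<open>u \<le> t + u\<^sup>2/t\<close>.\<close>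
  have "t * u \<le> t * t + u * u"
    using u t by (smt (verit) mult_nonneg_nonneg zero_le_square left_diff_distrib right_diff_distrib)
  then have "t * (t * u) \<le> t * (t * t + u * u)"
    using t by (intro mult_left_mono) auto
  then have "1 + u \<le> (1 + t) * (1 + u\<^sup>2 / t\<^sup>2)"
    using t by (simp add: field_simps power2_eq_square) (smt (verit) zero_le_square)
  also have "\<dots> \<le> (1 + t) * (1 + lam * T)" using quot t by (intro mult_left_mono) auto
  finally have "1 + u \<le> (1 + t) * (1 + lam * T)" .
  then have "lam * (S - T) \<le> (1 + u) - (1 + u) / (1 + t)"
    using t by (simp add: u_def field_simps)
  also have "\<dots> = (1 - 1 / (1 + t)) * (1 + lam * S)" using t by (simp add: field_simps u_def)
  finally show ?thesis by (simp add: t_def contraction_rate_def)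
qed

definition log_tree_step :: "real \<Rightarrow> 'a set \<Rightarrow> ('a \<Rightarrow> real) \<Rightarrow> real \<Rightarrow> real" where
  "log_tree_step lam I s \<tau> = ln (1 + lam * (\<Sum>i\<in>I. 1 / (1 + exp \<tau> * s i)))"

lemma logistic_has_derivative:
  fixes s :: real
  assumes "s \<ge> 0"
  shows "((\<lambda>\<tau>. 1 / (1 + exp \<tau> * s)) has_real_derivative
          - (1 / (1 + exp t * s)) * (1 - 1 / (1 + exp t * s))) (at t)"
proof -
  have pos: "1 + exp t * s > 0" using assms by (simp add: add_pos_nonneg)
  have "1 - 1 / (1 + exp t * s) = exp t * s / (1 + exp t * s)"
    using pos by (simp add: field_simps)
  then show ?thesis
    by (auto intro!: derivative_eq_intros simp: power2_eq_square)
qed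

lemma log_tree_step_has_derivative:
  assumes lam: "lam > 0" and s: "\<And>i. i \<in> I \<Longrightarrow> s i \<ge> 0"
  shows "(log_tree_step lam I s has_real_derivative
     - lam * (\<Sum>i\<in>I. (1 / (1 + exp t * s i)) * (1 - 1 / (1 + exp t * s i)))
        / (1 + lam * (\<Sum>i\<in>I. 1 / (1 + exp t * s i)))) (at t)"
proof -
  have "0 \<le> (\<Sum>i\<in>I. 1 / (1 + exp t * s i))"
    using s by (intro sum_nonneg) (simp add: add_pos_nonneg)
  then have pos: "1 + lam * (\<Sum>i\<in>I. 1 / (1 + exp t * s i)) > 0"
    using lam by (simp add: add_pos_nonneg)
  have sum: "((\<lambda>\<tau>. \<Sum>i\<in>I. 1 / (1 + exp \<tau> * s i)) has_real_derivative
          (\<Sum>i\<in>I. - (1 / (1 + exp t * s i)) * (1 - 1 / (1 + exp t * s i)))) (at t)"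
    by (rule DERIV_sum) (rule logistic_has_derivative[OF s])
  have "((\<lambda>\<tau>. 1 + lam * (\<Sum>i\<in>I. 1 / (1 + exp \<tau> * s i))) has_real_derivative
          lam * (\<Sum>i\<in>I. - (1 / (1 + exp t * s i)) * (1 - 1 / (1 + exp t * s i)))) (at t)"
    using DERIV_add[OF DERIV_const DERIV_cmult[OF sum, of lam], of 1] by simp
  from DERIV_chain2[OF DERIV_ln_divide[OF pos] this] show ?thesis
    unfolding log_tree_step_def by (simp add: sum_negf)
qed

lemma log_tree_step_derivative_bound:
  fixes lam :: real and d :: nat
  assumes lam: "lam > 0" and s: "\<And>i. i \<in> I \<Longrightarrow> s i \<ge> 0" and card: "card I \<le> d"
  shows "\<bar>- lam * (\<Sum>i\<in>I. (1 / (1 + exp t * s i)) * (1 - 1 / (1 + exp t * s i)))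
        / (1 + lam * (\<Sum>i\<in>I. 1 / (1 + exp t * s i)))\<bar> \<le> contraction_rate lam d"
proof -
  define Q where "Q i = 1 / (1 + exp t * s i)" for i
  have Q: "0 \<le> Q i \<and> Q i \<le> 1" if "i \<in> I" for i
    using s[OF that] by (simp add: Q_def add_pos_nonneg)
  define S where "S = (\<Sum>i\<in>I. Q i)"
  define T where "T = (\<Sum>i\<in>I. (Q i)\<^sup>2)"
  have S: "S \<ge> 0" and T: "T \<ge> 0" unfolding S_def T_def using Q by (auto intro: sum_nonneg)
  have "S\<^sup>2 \<le> T * card I" unfolding S_def T_def by (rule sum_squared_le_sum_of_squares)
  also have "\<dots> \<le> T * d" using T card by (intro mult_left_mono) auto
  finally have CS: "S\<^sup>2 \<le> real d * T" by (simp add: mult.commute)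
  have num: "(\<Sum>i\<in>I. Q i * (1 - Q i)) = S - T"
    unfolding S_def T_def by (simp add: algebra_simps power2_eq_square sum_subtractf)
  have num_nonneg: "0 \<le> (\<Sum>i\<in>I. Q i * (1 - Q i))"
    using Q by (intro sum_nonneg) auto
  have pos: "1 + lam * S > 0" using lam S by (simp add: add_pos_nonneg)
  have "lam * (S - T) / (1 + lam * S) \<le> contraction_rate lam d"
    using contraction_factor_bound[OF lam S T CS] pos by (simp add: divide_le_eq)
  then show ?thesis
    using num num_nonneg lam pos by (simp add: Q_def[symmetric] S_def[symmetric] abs_divide)
qed

lemma log_tree_step_lipschitz:
  fixes lam :: real and d :: nat
  assumes lam: "lam > 0" and s: "\<And>i. i \<in> I \<Longrightarrow> s i \<ge> 0" and card: "card I \<le> d"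
  shows "\<bar>log_tree_step lam I s a - log_tree_step lam I s b\<bar> \<le> contraction_rate lam d * \<bar>a - b\<bar>"
proof -
  have "norm (log_tree_step lam I s a - log_tree_step lam I s b)
      \<le> contraction_rate lam d * norm (a - b)"
    by (rule field_differentiable_bound[OF convex_UNIV])
      (auto intro: log_tree_step_has_derivative[THEN has_field_derivative_at_within]
        log_tree_step_derivative_bound assms)
  then show ?thesis by simp
qed

lemma sum_list_map_eq_sum_nth: "sum_list (map f xs) = (\<Sum>i<length xs. f (xs ! i))"
  by (simp add: sum_list_sum_nth atLeast0LessThan)

lemma ln_tree_step_antimono:
  fixes lam :: real and f g :: "'a \<Rightarrow> real"
  assumes lam: "lam > 0" and g: "\<And>c. c \<in> set cs \<Longrightarrow> 0 \<le> g c \<and> g c \<le> f c"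
  shows "ln (1 + lam * sum_list (map (\<lambda>c. 1 / (1 + f c)) cs))
      \<le> ln (1 + lam * sum_list (map (\<lambda>c. 1 / (1 + g c)) cs))"
proof -
  have "0 \<le> sum_list (map (\<lambda>c. 1 / (1 + f c)) cs)"
    using g by (intro sum_list_nonneg) (force simp: add_pos_nonneg)
  moreover have "sum_list (map (\<lambda>c. 1 / (1 + f c)) cs) \<le> sum_list (map (\<lambda>c. 1 / (1 + g c)) cs)"
    using g by (intro sum_list_mono) (simp add: add_pos_nonneg frac_le)
  ultimately show ?thesis
    using lam by (subst ln_le_cancel_iff) (auto simp: add_pos_nonneg mult_left_mono)
qed

text \<open>Writing \<open>a c = exp \<tau> * s c\<close> with \<open>\<bar>\<tau>\<bar> \<le> D\<close>, both sides are sandwiched between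
  values of the contraction \<open>log_tree_step\<close> at \<open>-D\<close>, \<open>0\<close> and \<open>D\<close>.\<close>
lemma tree_step_log_contraction:
  fixes lam D :: real and d :: nat and a s :: "'a \<Rightarrow> real"
  assumes lam: "lam > 0" and D: "D \<ge> 0" and len: "length cs \<le> d"
    and s: "\<And>c. c \<in> set cs \<Longrightarrow> s c \<ge> 0"
    and a: "\<And>c. c \<in> set cs \<Longrightarrow> exp (-D) * s c \<le> a c \<and> a c \<le> exp D * s c"
  shows "\<bar>ln (1 / (1 + lam * sum_list (map (\<lambda>c. 1 / (1 + a c)) cs)))
          - ln (1 / (1 + lam * sum_list (map (\<lambda>c. 1 / (1 + s c)) cs)))\<bar>
         \<le> contraction_rate lam d * D"
proof -
  define H where "H = log_tree_step lam {..<length cs} (\<lambda>i. s (cs ! i))"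
  have H: "H \<tau> = ln (1 + lam * sum_list (map (\<lambda>c. 1 / (1 + exp \<tau> * s c)) cs))" for \<tau>
    unfolding H_def log_tree_step_def sum_list_map_eq_sum_nth ..
  have lip: "\<bar>H \<tau> - H 0\<bar> \<le> contraction_rate lam d * \<bar>\<tau>\<bar>" for \<tau>
    unfolding H_def using log_tree_step_lipschitz[OF lam, of "{..<length cs}" "\<lambda>i. s (cs ! i)" d \<tau> 0] len s
    by auto
  have a0: "0 \<le> a c" if "c \<in> set cs" for c
    using a[OF that] s[OF that] by (meson exp_ge_zero mult_nonneg_nonneg order_trans)
  have ln_inv: "ln (1 / (1 + lam * sum_list (map (\<lambda>c. 1 / (1 + f c)) cs)))
      = - ln (1 + lam * sum_list (map (\<lambda>c. 1 / (1 + f c)) cs))"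
    if "\<And>c. c \<in> set cs \<Longrightarrow> f c \<ge> 0" for f :: "'a \<Rightarrow> real"
  proof -
    have "0 \<le> sum_list (map (\<lambda>c. 1 / (1 + f c)) cs)"
      using that by (intro sum_list_nonneg) (force simp: add_pos_nonneg)
    then show ?thesis using lam by (simp add: ln_div add_pos_nonneg)
  qed
  have "H D \<le> ln (1 + lam * sum_list (map (\<lambda>c. 1 / (1 + a c)) cs))"
    unfolding H using a a0 by (intro ln_tree_step_antimono[OF lam]) auto
  moreover have "ln (1 + lam * sum_list (map (\<lambda>c. 1 / (1 + a c)) cs)) \<le> H (-D)"
    unfolding H using a s by (intro ln_tree_step_antimono[OF lam]) auto
  moreover have "ln (1 + lam * sum_list (map (\<lambda>c. 1 / (1 + s c)) cs)) = H 0"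
    unfolding H by simp
  moreover have "ln (1 / (1 + lam * sum_list (map (\<lambda>c. 1 / (1 + a c)) cs)))
      = - ln (1 + lam * sum_list (map (\<lambda>c. 1 / (1 + a c)) cs))"
    using a0 by (rule ln_inv)
  moreover have "ln (1 / (1 + lam * sum_list (map (\<lambda>c. 1 / (1 + s c)) cs)))
      = - ln (1 + lam * sum_list (map (\<lambda>c. 1 / (1 + s c)) cs))"
    using s by (rule ln_inv)
  ultimately show ?thesis
    using lip[of D] lip[of "-D"] D by (simp add: abs_le_iff)
qed

definition edges_within :: "nat \<Rightarrow> (nat \<Rightarrow> nat list) \<Rightarrow> nat set \<Rightarrow> (nat \<times> nat \<times> nat) set" where
  "edges_within n adj S = {e \<in> edges n adj. ends e \<subseteq> S}"

definition matchings_within :: "nat \<Rightarrow> (nat \<Rightarrow> nat list) \<Rightarrow> nat set \<Rightarrow> (nat \<times> nat \<times> nat) set set" where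
  "matchings_within n adj S =
     {M. M \<subseteq> edges_within n adj S \<and> (\<forall>e\<in>M. \<forall>e'\<in>M. e \<noteq> e' \<longrightarrow> ends e \<inter> ends e' = {})}"

definition Z_induced :: "nat \<Rightarrow> (nat \<Rightarrow> nat list) \<Rightarrow> real \<Rightarrow> nat set \<Rightarrow> real" where
  "Z_induced n adj lam S = (\<Sum>M\<in>matchings_within n adj S. lam ^ card M)"

lemma finite_edges: "finite (edges n adj)"
proof (rule finite_subset)
  show "edges n adj \<subseteq> (SIGMA u:{..<n}. SIGMA v:{..<n}. {..<mult adj u v})"
    unfolding edges_def by auto
qed auto

lemma finite_matchings_within: "finite (matchings_within n adj S)"
  by (rule finite_subset[of _ "Pow (edges n adj)"])
    (auto simp: matchings_within_def edges_within_def finite_edges)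

lemma finite_matching_within: "M \<in> matchings_within n adj S \<Longrightarrow> finite M"
  using finite_edges by (rule rev_finite_subset) (auto simp: matchings_within_def edges_within_def)

lemma Z_induced_ge_1:
  assumes "lam \<ge> 0"
  shows "Z_induced n adj lam S \<ge> 1"
proof -
  have "{} \<in> matchings_within n adj S" unfolding matchings_within_def by auto
  then have "Z_induced n adj lam S = 1 + (\<Sum>M\<in>matchings_within n adj S - {{}}. lam ^ card M)"
    unfolding Z_induced_def by (simp add: sum.remove[OF finite_matchings_within])
  moreover have "(\<Sum>M\<in>matchings_within n adj S - {{}}. lam ^ card M) \<ge> 0"
    using assms by (intro sum_nonneg) auto
  ultimately show ?thesis by simp
qed

lemma Z_induced_pos: "lam \<ge> 0 \<Longrightarrow> Z_induced n adj lam S > 0"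
  using Z_induced_ge_1 by (rule less_le_trans[OF zero_less_one])

lemma Z_induced_empty: "Z_induced n adj lam {} = 1"
proof -
  have "matchings_within n adj {} = {{}}"
    unfolding matchings_within_def edges_within_def ends_def by auto
  then show ?thesis unfolding Z_induced_def by simp
qed

lemma Z_eq_Z_induced: "Z n adj lam = Z_induced n adj lam {..<n}"
proof -
  have "matchings_within n adj {..<n} = {M. is_matching n adj M}"
    unfolding matchings_within_def is_matching_def edges_within_def edges_def ends_def by auto
  then show ?thesis unfolding Z_def Z_induced_def by simp
qed

lemma Z_induced_containing_edge:
  assumes e: "e \<in> edges_within n adj S"
  shows "(\<Sum>M\<in>{M \<in> matchings_within n adj S. e \<in> M}. lam ^ card M)
       = lam * Z_induced n adj lam (S - ends e)"
proof -
  have not_in: "e \<notin> M" if "M \<in> matchings_within n adj (S - ends e)" for M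
    using that by (auto simp: matchings_within_def edges_within_def ends_def)
  have "bij_betw (insert e) (matchings_within n adj (S - ends e)) {M \<in> matchings_within n adj S. e \<in> M}"
  proof (rule bij_betw_byWitness[where f' = "\<lambda>M. M - {e}"])
    show "\<forall>M\<in>matchings_within n adj (S - ends e). insert e M - {e} = M"
      using not_in by auto
    show "\<forall>M\<in>{M \<in> matchings_within n adj S. e \<in> M}. insert e (M - {e}) = M" by auto
    show "insert e ` matchings_within n adj (S - ends e) \<subseteq> {M \<in> matchings_within n adj S. e \<in> M}"
      using e by (auto simp: matchings_within_def edges_within_def) (blast+)
    show "(\<lambda>M. M - {e}) ` {M \<in> matchings_within n adj S. e \<in> M} \<subseteq> matchings_within n adj (S - ends e)"
      unfolding matchings_within_def edges_within_def by blast
  qed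
  then have "(\<Sum>M\<in>{M \<in> matchings_within n adj S. e \<in> M}. lam ^ card M)
      = (\<Sum>M\<in>matchings_within n adj (S - ends e). lam ^ card (insert e M))"
    by (rule sum.reindex_bij_betw[symmetric])
  also have "\<dots> = (\<Sum>M\<in>matchings_within n adj (S - ends e). lam * lam ^ card M)"
    using not_in finite_matching_within by (intro sum.cong) auto
  finally show ?thesis unfolding Z_induced_def by (simp add: sum_distrib_left)
qed

lemma matchings_within_mono: "S \<subseteq> T \<Longrightarrow> matchings_within n adj S \<subseteq> matchings_within n adj T"
  unfolding matchings_within_def edges_within_def by blast

lemma Z_induced_mono:
  assumes "lam \<ge> 0" "S \<subseteq> T"
  shows "Z_induced n adj lam S \<le> Z_induced n adj lam T"
  unfolding Z_induced_def using assms matchings_within_mono[OF assms(2)]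
  by (intro sum_mono2 finite_matchings_within) auto

lemma Z_induced_split_at_vertex:
  "Z_induced n adj lam S = Z_induced n adj lam (S - {w})
     + lam * (\<Sum>e\<in>{e \<in> edges_within n adj S. w \<in> ends e}. Z_induced n adj lam (S - ends e))"
proof -
  define I where "I = {e \<in> edges_within n adj S. w \<in> ends e}"
  define A where "A e = {M \<in> matchings_within n adj S. e \<in> M}" for e
  have finI: "finite I" unfolding I_def edges_within_def using finite_edges by auto
  have finA: "finite (A e)" for e unfolding A_def using finite_matchings_within by auto
  have "matchings_within n adj S = matchings_within n adj (S - {w}) \<union> (\<Union>e\<in>I. A e)"
    unfolding I_def A_def matchings_within_def edges_within_def by auto
  moreover have "matchings_within n adj (S - {w}) \<inter> (\<Union>e\<in>I. A e) = {}"
    unfolding I_def A_def matchings_within_def edges_within_def by auto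
  moreover have "A e \<inter> A e' = {}" if "e \<in> I" "e' \<in> I" "e \<noteq> e'" for e e'
    using that unfolding I_def A_def matchings_within_def by blast
  ultimately have "Z_induced n adj lam S = Z_induced n adj lam (S - {w})
      + (\<Sum>e\<in>I. \<Sum>M\<in>A e. lam ^ card M)"
    unfolding Z_induced_def using finI finA finite_matchings_within
    by (simp add: sum.union_disjoint sum.UNION_disjoint)
  also have "(\<Sum>e\<in>I. \<Sum>M\<in>A e. lam ^ card M) = (\<Sum>e\<in>I. lam * Z_induced n adj lam (S - ends e))"
    unfolding A_def I_def by (intro sum.cong refl Z_induced_containing_edge) simp
  finally show ?thesis unfolding I_def by (simp add: sum_distrib_left)
qed

lemma sum_list_map_eq_sum_count_list:
  fixes f :: "'a \<Rightarrow> 'b::comm_semiring_1"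
  assumes "set xs \<subseteq> X" "finite X"
  shows "sum_list (map f xs) = (\<Sum>x\<in>X. of_nat (count_list xs x) * f x)"
  using assms(1)
proof (induction xs)
  case (Cons a xs)
  have "(\<Sum>x\<in>X. of_nat (count_list (a # xs) x) * f x)
      = (\<Sum>x\<in>X. (if x = a then f x else 0) + of_nat (count_list xs x) * f x)"
    by (intro sum.cong) (auto simp: algebra_simps)
  also have "\<dots> = f a + sum_list (map f xs)"
    using Cons assms(2) by (simp add: sum.distrib sum.delta')
  finally show ?case by simp
qed simp

text \<open>The \<open>j\<close>-th parallel copy of the edge \<open>{w, w'}\<close>, as encoded in \<open>edges\<close>.\<close>
definition edge_copy :: "nat \<Rightarrow> nat \<times> nat \<Rightarrow> nat \<times> nat \<times> nat" where
  "edge_copy w p = (min w (fst p), max w (fst p), snd p)"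

lemma ends_edge_copy: "ends (edge_copy w p) = {w, fst p}"
  unfolding ends_def edge_copy_def by (auto simp: min_def max_def)

lemma inj_on_edge_copy: "inj_on (edge_copy w) (SIGMA w':S - {w}. J w')"
  unfolding edge_copy_def by (rule inj_onI) (auto simp: min_def max_def split: if_splits)

lemma edges_at_vertex_eq_image:
  assumes mg: "multigraph n adj" and S: "S \<subseteq> {..<n}" and w: "w \<in> S"
  shows "{e \<in> edges_within n adj S. w \<in> ends e} = edge_copy w ` (SIGMA w':S - {w}. {..<mult adj w w'})"
proof -
  have sym: "mult adj u v = mult adj v u" if "u \<in> S" "v \<in> S" for u v
    using mg S that unfolding multigraph_def by (cases "u = v") (auto simp: subset_iff)
  show ?thesis
  proof (intro equalityI subsetI)
    fix e assume "e \<in> {e \<in> edges_within n adj S. w \<in> ends e}"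
    then obtain u v j where uvj: "e = (u, v, j)" "u < v" "j < mult adj u v" "u \<in> S" "v \<in> S"
        "w = u \<or> w = v"
      unfolding edges_within_def edges_def ends_def by auto
    then have "e = edge_copy w (if w = u then v else u, j)"
      unfolding edge_copy_def by auto
    moreover have "(if w = u then v else u, j) \<in> (SIGMA w':S - {w}. {..<mult adj w w'})"
      using uvj sym[of u v] by auto
    ultimately show "e \<in> edge_copy w ` (SIGMA w':S - {w}. {..<mult adj w w'})" by blast
  next
    fix e assume "e \<in> edge_copy w ` (SIGMA w':S - {w}. {..<mult adj w w'})"
    then obtain w' j where w'j: "w' \<in> S" "w' \<noteq> w" "j < mult adj w w'" "e = edge_copy w (w', j)"
      by auto
    then have "w < n" "w' < n" using w S by auto
    with w'j show "e \<in> {e \<in> edges_within n adj S. w \<in> ends e}"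
      using w sym[of w w'] unfolding edge_copy_def edges_within_def edges_def ends_def
      by (cases "w < w'") auto
  qed
qed

lemma sum_edges_at_vertex:
  fixes f :: "nat set \<Rightarrow> real"
  assumes mg: "multigraph n adj" and S: "S \<subseteq> {..<n}" and w: "w \<in> S"
  shows "(\<Sum>e\<in>{e \<in> edges_within n adj S. w \<in> ends e}. f (ends e))
       = (\<Sum>w'\<leftarrow>filter (\<lambda>w'. w' \<in> S \<and> w' \<noteq> w) (adj w). f {w, w'})"
proof -
  have "(\<Sum>e\<in>{e \<in> edges_within n adj S. w \<in> ends e}. f (ends e))
      = (\<Sum>(w', j)\<in>(SIGMA w':S - {w}. {..<mult adj w w'}). f {w, w'})"
    unfolding edges_at_vertex_eq_image[OF assms]
    by (simp add: sum.reindex inj_on_edge_copy ends_edge_copy split_def)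
  also have "\<dots> = (\<Sum>w'\<in>S - {w}. real (mult adj w w') * f {w, w'})"
    using S by (subst sum.Sigma[symmetric]) (auto intro: finite_subset)
  also have "\<dots> = (\<Sum>w'\<in>S - {w}.
      real (count_list (filter (\<lambda>w'. w' \<in> S \<and> w' \<noteq> w) (adj w)) w') * f {w, w'})"
    by (intro sum.cong refl) (simp add: mult_def flip: count_mset)
  also have "\<dots> = (\<Sum>w'\<leftarrow>filter (\<lambda>w'. w' \<in> S \<and> w' \<noteq> w) (adj w). f {w, w'})"
    using S by (intro sum_list_map_eq_sum_count_list[symmetric]) (auto intro: finite_subset)
  finally show ?thesis .
qed

lemma Z_induced_vertex_recursion:
  assumes "multigraph n adj" "S \<subseteq> {..<n}" "w \<in> S"
  shows "Z_induced n adj lam S = Z_induced n adj lam (S - {w}) +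
     lam * (\<Sum>w'\<leftarrow>filter (\<lambda>w'. w' \<in> S \<and> w' \<noteq> w) (adj w). Z_induced n adj lam (S - {w} - {w'}))"
  using Z_induced_split_at_vertex[of n adj lam S w]
    sum_edges_at_vertex[OF assms, of "\<lambda>X. Z_induced n adj lam (S - X)"]
  by (simp add: Diff_insert2[symmetric] insert_commute)

lemma tree_map_bounds:
  fixes lam :: real and f :: "'a \<Rightarrow> real"
  assumes lam: "lam > 0" and f: "\<And>x. x \<in> set xs \<Longrightarrow> 0 \<le> f x \<and> f x \<le> 1" and len: "length xs \<le> d"
  shows "1 / (1 + lam * d) \<le> 1 / (1 + lam * sum_list (map f xs))
    \<and> 1 / (1 + lam * sum_list (map f xs)) \<le> 1"
proof -
  have "0 \<le> sum_list (map f xs)" using f by (intro sum_list_nonneg) auto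
  moreover have "sum_list (map f xs) \<le> d"
    using sum_list_mono[of xs f "\<lambda>_. 1"] f len by (simp add: sum_list_triv)
  ultimately show ?thesis
    using lam by (auto simp: add_pos_nonneg mult_left_mono intro!: divide_left_mono)
qed

lemma tree_map_antimono:
  fixes lam a b :: real
  assumes "lam > 0" "0 \<le> a" "a \<le> b"
  shows "1 / (1 + lam * b) \<le> 1 / (1 + lam * a)"
  using assms by (intro divide_left_mono) (auto simp: mult_left_mono add_pos_nonneg)

lemma abs_ln_diff_le:
  fixes q x y :: real
  assumes "0 < q" "q \<le> x" "x \<le> 1" "q \<le> y" "y \<le> 1"
  shows "\<bar>ln x - ln y\<bar> \<le> - ln q"
proof -
  have "ln q \<le> ln x" "ln x \<le> 0" "ln q \<le> ln y" "ln y \<le> 0" using assms by auto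
  then show ?thesis by linarith
qed

lemma exp_bounds_of_abs_ln_diff:
  fixes x p D :: real
  assumes "0 < x" "0 < p" "\<bar>ln x - ln p\<bar> \<le> D"
  shows "exp (-D) * p \<le> x \<and> x \<le> exp D * p"
proof -
  have "exp (-D) * p = exp (ln p - D)" and "exp D * p = exp (ln p + D)"
    using assms by (simp_all add: exp_diff exp_add exp_minus field_simps)
  moreover have "exp (ln p - D) \<le> exp (ln x)" "exp (ln x) \<le> exp (ln p + D)"
    using assms(3) by (simp_all add: abs_le_iff)
  ultimately show ?thesis using assms by simp
qed

lemma sum_list_scaled_exp_bounds:
  fixes c D :: real and p t :: "'a \<Rightarrow> real"
  assumes c: "c \<ge> 0" and pt: "\<And>x. x \<in> set xs \<Longrightarrow> exp (-D) * p x \<le> t x \<and> t x \<le> exp D * p x"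
  shows "exp (-D) * (c * (\<Sum>x\<leftarrow>xs. p x)) \<le> c * (\<Sum>x\<leftarrow>xs. t x)
    \<and> c * (\<Sum>x\<leftarrow>xs. t x) \<le> exp D * (c * (\<Sum>x\<leftarrow>xs. p x))"
proof -
  have "exp (-D) * (\<Sum>x\<leftarrow>xs. p x) \<le> (\<Sum>x\<leftarrow>xs. t x)" "(\<Sum>x\<leftarrow>xs. t x) \<le> exp D * (\<Sum>x\<leftarrow>xs. p x)"
    using pt by (simp_all flip: sum_list_const_mult add: sum_list_mono)
  then show ?thesis using c by (simp add: mult.left_commute[of "exp _"] mult_left_mono)
qed

text \<open>Paths of the tree of simple paths in the subgraph induced by \<open>{v. inG v}\<close> are stored
  reversed: the head is the current endpoint.  \<open>gibbs_ratio pth\<close> is the probability that the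
  head is uncovered once the earlier vertices of the path are deleted.\<close>
locale path_tree =
  fixes lam :: real and n :: nat and adj :: "nat \<Rightarrow> nat list" and \<Delta> :: nat
    and inG :: "nat \<Rightarrow> bool"
  assumes lam_pos: "lam > 0" and multigraph: "multigraph n adj"
    and max_degree: "max_degree_le n adj \<Delta>"
begin

definition vertices :: "nat set" where
  "vertices = {v. v < n \<and> inG v}"

definition simple_path :: "nat list \<Rightarrow> bool" where
  "simple_path pth \<longleftrightarrow> pth \<noteq> [] \<and> distinct pth \<and> set pth \<subseteq> vertices"

definition children :: "nat list \<Rightarrow> nat list" where
  "children pth = filter (\<lambda>w'. inG w' \<and> w' \<notin> set pth) (adj (hd pth))"

definition gibbs_ratio :: "nat list \<Rightarrow> real" where
  "gibbs_ratio pth = Z_induced n adj lam (vertices - set (tl pth) - {hd pth})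
     / Z_induced n adj lam (vertices - set (tl pth))"

definition tree_value :: "nat \<Rightarrow> nat list \<Rightarrow> real" where
  "tree_value h pth = fst (tree_val lam adj inG h pth (hd pth))"

lemma tree_value_0: "tree_value 0 pth = 1"
  unfolding tree_value_def by simp

lemma tree_value_Suc:
  "tree_value (Suc h) pth = 1 / (1 + lam * (\<Sum>w'\<leftarrow>children pth. tree_value h (w' # pth)))"
  unfolding tree_value_def children_def by (simp add: Let_def comp_def)

lemma length_children_le: "simple_path pth \<Longrightarrow> length (children pth) \<le> \<Delta>"
  using max_degree unfolding simple_path_def vertices_def children_def max_degree_le_def
  by (cases pth) (auto intro: le_trans[OF length_filter_le])

lemma simple_path_Cons_child: "simple_path pth \<Longrightarrow> w' \<in> set (children pth) \<Longrightarrow> simple_path (w' # pth)"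
  using multigraph unfolding simple_path_def vertices_def children_def multigraph_def
  by (cases pth) auto

lemma gibbs_ratio_recursion:
  assumes pth: "simple_path pth"
  shows "gibbs_ratio pth = 1 / (1 + lam * (\<Sum>w'\<leftarrow>children pth. gibbs_ratio (w' # pth)))"
proof -
  define S where "S = vertices - set (tl pth)"
  define w where "w = hd pth"
  have wS: "w \<in> S" and S: "S \<subseteq> {..<n}" and set_pth: "set pth = insert w (set (tl pth))"
    using pth unfolding S_def w_def simple_path_def vertices_def by (cases pth; auto)+
  have "filter (\<lambda>w'. w' \<in> S \<and> w' \<noteq> w) (adj w) = children pth"
    unfolding children_def w_def[symmetric] using multigraph wS S set_pth
    by (intro filter_cong refl) (auto simp: S_def vertices_def multigraph_def)
  then have rec: "Z_induced n adj lam S = Z_induced n adj lam (S - {w}) +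
      lam * (\<Sum>w'\<leftarrow>children pth. Z_induced n adj lam (S - {w} - {w'}))"
    using Z_induced_vertex_recursion[OF multigraph S wS] by simp
  have "vertices - set pth = S - {w}" unfolding S_def set_pth by auto
  then have child: "gibbs_ratio (w' # pth) = Z_induced n adj lam (S - {w} - {w'}) / Z_induced n adj lam (S - {w})"
    for w' unfolding gibbs_ratio_def by simp
  define Z0 where "Z0 = Z_induced n adj lam (S - {w})"
  have Z0: "Z0 > 0" unfolding Z0_def using lam_pos by (simp add: Z_induced_pos)
  have "gibbs_ratio pth = Z0 / (Z0 + lam * (\<Sum>w'\<leftarrow>children pth. Z_induced n adj lam (S - {w} - {w'})))"
    unfolding gibbs_ratio_def S_def[symmetric] w_def[symmetric] Z0_def rec ..
  also have "\<dots> = 1 / (1 + lam * ((\<Sum>w'\<leftarrow>children pth. Z_induced n adj lam (S - {w} - {w'})) / Z0))"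
    using Z0 by (simp add: field_simps)
  also have "\<dots> = 1 / (1 + lam * (\<Sum>w'\<leftarrow>children pth. gibbs_ratio (w' # pth)))"
    unfolding child Z0_def[symmetric] divide_inverse sum_list_mult_const ..
  finally show ?thesis .
qed

lemma gibbs_ratio_pos: "gibbs_ratio pth > 0"
  unfolding gibbs_ratio_def using lam_pos by (simp add: Z_induced_pos)

lemma gibbs_ratio_le_1: "gibbs_ratio pth \<le> 1"
  unfolding gibbs_ratio_def using lam_pos
  by (simp add: Z_induced_pos Z_induced_mono divide_le_eq Diff_subset)

lemma gibbs_ratio_bounds:
  assumes pth: "simple_path pth"
  shows "1 / (1 + lam * \<Delta>) \<le> gibbs_ratio pth \<and> gibbs_ratio pth \<le> 1"
  unfolding gibbs_ratio_recursion[OF pth]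
  using gibbs_ratio_pos gibbs_ratio_le_1
  by (intro tree_map_bounds[OF lam_pos _ length_children_le[OF pth]]) (auto intro: less_imp_le)

lemma tree_value_bounds:
  "simple_path pth \<Longrightarrow> 1 / (1 + lam * \<Delta>) \<le> tree_value h pth \<and> tree_value h pth \<le> 1"
proof (induction h arbitrary: pth)
  case 0
  then show ?case using lam_pos by (simp add: tree_value_0 add_pos_nonneg)
next
  case (Suc h)
  have "0 < 1 / (1 + lam * \<Delta>)" using lam_pos by (simp add: add_pos_nonneg)
  then show ?case
    unfolding tree_value_Suc using Suc simple_path_Cons_child
    by (intro tree_map_bounds[OF lam_pos _ length_children_le[OF Suc.prems]])
      (meson less_le_trans less_imp_le)
qed

lemma tree_value_pos: "simple_path pth \<Longrightarrow> tree_value h pth > 0"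
  using tree_value_bounds[of pth h] lam_pos
  by (smt (verit) add_pos_nonneg mult_nonneg_nonneg of_nat_0_le_iff zero_less_divide_1_iff)

text \<open>The alternation comes from \<open>x \<mapsto> 1 / (1 + lam * x)\<close> being decreasing.\<close>
lemma tree_value_interlaces:
  "simple_path pth \<Longrightarrow>
    (even h \<longrightarrow> gibbs_ratio pth \<le> tree_value h pth) \<and> (odd h \<longrightarrow> tree_value h pth \<le> gibbs_ratio pth)"
proof (induction h arbitrary: pth)
  case 0
  then show ?case using gibbs_ratio_le_1 by (simp add: tree_value_0)
next
  case (Suc h)
  have children: "\<And>c. c \<in> set (children pth) \<Longrightarrow> simple_path (c # pth)"
    using simple_path_Cons_child[OF Suc.prems] .
  have "0 \<le> (\<Sum>w'\<leftarrow>children pth. gibbs_ratio (w' # pth))"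
    by (intro sum_list_nonneg) (auto intro: less_imp_le gibbs_ratio_pos)
  moreover have "0 \<le> (\<Sum>w'\<leftarrow>children pth. tree_value h (w' # pth))"
    using children tree_value_pos by (intro sum_list_nonneg) (auto intro: less_imp_le)
  moreover have "even h \<Longrightarrow> (\<Sum>w'\<leftarrow>children pth. gibbs_ratio (w' # pth))
      \<le> (\<Sum>w'\<leftarrow>children pth. tree_value h (w' # pth))"
    using Suc.IH children by (intro sum_list_mono) auto
  moreover have "odd h \<Longrightarrow> (\<Sum>w'\<leftarrow>children pth. tree_value h (w' # pth))
      \<le> (\<Sum>w'\<leftarrow>children pth. gibbs_ratio (w' # pth))"
    using Suc.IH children by (intro sum_list_mono) auto
  ultimately show ?case
    unfolding tree_value_Suc gibbs_ratio_recursion[OF Suc.prems]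
    using tree_map_antimono[OF lam_pos] by auto
qed

lemma ln_tree_value_Suc_Suc_error:
  assumes pth: "simple_path pth" and D: "D \<ge> 0"
    and grandchildren: "\<And>c g. c \<in> set (children pth) \<Longrightarrow> g \<in> set (children (c # pth)) \<Longrightarrow>
      \<bar>ln (tree_value h (g # c # pth)) - ln (gibbs_ratio (g # c # pth))\<bar> \<le> D"
  shows "\<bar>ln (tree_value (Suc (Suc h)) pth) - ln (gibbs_ratio pth)\<bar> \<le> contraction_rate lam \<Delta> * D"
proof -
  define a where "a c = lam * (\<Sum>g\<leftarrow>children (c # pth). tree_value h (g # c # pth))" for c
  define s where "s c = lam * (\<Sum>g\<leftarrow>children (c # pth). gibbs_ratio (g # c # pth))" for c
  have s: "s c \<ge> 0" for c
    unfolding s_def using lam_pos gibbs_ratio_pos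
    by (intro mult_nonneg_nonneg sum_list_nonneg) (auto intro: less_imp_le)
  have a: "exp (-D) * s c \<le> a c \<and> a c \<le> exp D * s c" if c: "c \<in> set (children pth)" for c
    unfolding a_def s_def using lam_pos
  proof (intro sum_list_scaled_exp_bounds)
    fix g assume g: "g \<in> set (children (c # pth))"
    have "simple_path (g # c # pth)" using pth c g by (intro simple_path_Cons_child) auto
    then show "exp (-D) * gibbs_ratio (g # c # pth) \<le> tree_value h (g # c # pth)
        \<and> tree_value h (g # c # pth) \<le> exp D * gibbs_ratio (g # c # pth)"
      using grandchildren[OF c g] by (intro exp_bounds_of_abs_ln_diff tree_value_pos gibbs_ratio_pos)
  qed (use lam_pos in simp)
  have "map (\<lambda>c. gibbs_ratio (c # pth)) (children pth) = map (\<lambda>c. 1 / (1 + s c)) (children pth)"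
  proof (rule map_cong[OF refl])
    fix c assume "c \<in> set (children pth)"
    then show "gibbs_ratio (c # pth) = 1 / (1 + s c)"
      unfolding s_def by (rule gibbs_ratio_recursion[OF simple_path_Cons_child[OF pth]])
  qed
  then have "gibbs_ratio pth = 1 / (1 + lam * (\<Sum>c\<leftarrow>children pth. 1 / (1 + s c)))"
    by (simp only: gibbs_ratio_recursion[OF pth])
  moreover have "tree_value (Suc (Suc h)) pth = 1 / (1 + lam * (\<Sum>c\<leftarrow>children pth. 1 / (1 + a c)))"
    unfolding tree_value_Suc a_def ..
  ultimately show ?thesis
    using tree_step_log_contraction[OF lam_pos D length_children_le[OF pth] s a] by simp
qed

lemma ln_tree_value_error:
  "simple_path pth \<Longrightarrow>
    \<bar>ln (tree_value h pth) - ln (gibbs_ratio pth)\<bar> \<le> ln (1 + lam * \<Delta>) * contraction_rate lam \<Delta> ^ (h div 2)"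
proof (induction h arbitrary: pth rule: less_induct)
  case (less h)
  consider (shallow) "h < 2" | (deep) h' where "h = Suc (Suc h')"
    by (metis add_2_eq_Suc le_Suc_ex not_less)
  then show ?case
  proof cases
    case shallow
    have "- ln (1 / (1 + lam * \<Delta>)) = ln (1 + lam * \<Delta>)"
      using lam_pos by (simp add: ln_div add_pos_nonneg)
    then show ?thesis
      using shallow lam_pos tree_value_bounds[OF less.prems, of h] gibbs_ratio_bounds[OF less.prems]
        abs_ln_diff_le[of "1 / (1 + lam * \<Delta>)"] by (simp add: add_pos_nonneg)
  next
    case (deep h')
    have "\<bar>ln (tree_value h' (g # c # pth)) - ln (gibbs_ratio (g # c # pth))\<bar>
        \<le> ln (1 + lam * \<Delta>) * contraction_rate lam \<Delta> ^ (h' div 2)"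
      if "c \<in> set (children pth)" "g \<in> set (children (c # pth))" for c g
    proof -
      have "simple_path (g # c # pth)" using that less.prems by (intro simple_path_Cons_child) auto
      then show ?thesis using less.IH[of h'] deep by simp
    qed
    then have "\<bar>ln (tree_value h pth) - ln (gibbs_ratio pth)\<bar>
        \<le> contraction_rate lam \<Delta> * (ln (1 + lam * \<Delta>) * contraction_rate lam \<Delta> ^ (h' div 2))"
      unfolding deep using lam_pos contraction_rate_bounds
      by (intro ln_tree_value_Suc_Suc_error[OF less.prems]) auto
    then show ?thesis unfolding deep by (simp add: mult_ac)
  qed
qed

lemma ln_tree_value_step_le:
  assumes pth: "simple_path pth" and h: "h \<ge> 1"
  shows "\<bar>ln (tree_value h pth) - ln (tree_value (h - 1) pth)\<bar>
    \<le> 2 * ln (1 + lam * \<Delta>) * contraction_rate lam \<Delta> ^ ((h - 1) div 2)"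
proof -
  have "contraction_rate lam \<Delta> ^ (h div 2) \<le> contraction_rate lam \<Delta> ^ ((h - 1) div 2)"
    using contraction_rate_bounds lam_pos by (intro power_decreasing div_le_mono) auto
  then have "ln (1 + lam * \<Delta>) * contraction_rate lam \<Delta> ^ (h div 2)
      \<le> ln (1 + lam * \<Delta>) * contraction_rate lam \<Delta> ^ ((h - 1) div 2)"
    using lam_pos by (intro mult_left_mono) auto
  then show ?thesis
    using ln_tree_value_error[OF pth, of h] ln_tree_value_error[OF pth, of "h - 1"] by linarith
qed

lemma ln_tree_value_error_le_step:
  assumes pth: "simple_path pth" and h: "h \<ge> 1"
  shows "\<bar>ln (tree_value h pth) - ln (gibbs_ratio pth)\<bar> \<le> \<bar>ln (tree_value h pth) - ln (tree_value (h - 1) pth)\<bar>"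
proof -
  have "tree_value h pth \<le> gibbs_ratio pth \<and> gibbs_ratio pth \<le> tree_value (h - 1) pth
      \<or> tree_value (h - 1) pth \<le> gibbs_ratio pth \<and> gibbs_ratio pth \<le> tree_value h pth"
    using tree_value_interlaces[OF pth, of h] tree_value_interlaces[OF pth, of "h - 1"] h
    by (cases "even h") auto
  then show ?thesis
    using tree_value_pos[OF pth] gibbs_ratio_pos by auto
qed

lemma tree_val_queries_le:
  "simple_path pth \<Longrightarrow> real (snd (tree_val lam adj inG h pth (hd pth))) \<le> (real \<Delta> + 2) ^ h - 1"
proof (induction h arbitrary: pth)
  case (Suc h)
  define X where "X = (real \<Delta> + 2) ^ h"
  have X: "X \<ge> 1" unfolding X_def by simp
  have "(\<Sum>w'\<leftarrow>children pth. real (snd (tree_val lam adj inG h (w' # pth) w')))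
      \<le> (\<Sum>w'\<leftarrow>children pth. X - 1)"
    using Suc simple_path_Cons_child unfolding X_def by (intro sum_list_mono) fastforce
  also have "\<dots> \<le> \<Delta> * (X - 1)"
    using length_children_le[OF Suc.prems] X by (simp add: sum_list_triv mult_right_mono)
  finally have "real (snd (tree_val lam adj inG (Suc h) pth (hd pth))) \<le> 1 + \<Delta> + \<Delta> * (X - 1)"
    using max_degree Suc.prems
    unfolding children_def simple_path_def vertices_def max_degree_le_def
    by (cases pth) (auto simp: Let_def comp_def simp flip: sum_list_of_nat)
  also have "\<dots> \<le> (real \<Delta> + 2) ^ Suc h - 1" using X unfolding X_def by (simp add: algebra_simps)
  finally show ?case .
qed simp

end

definition later_vertices :: "nat \<Rightarrow> (nat \<Rightarrow> nat) \<Rightarrow> nat \<Rightarrow> nat set" where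
  "later_vertices n \<sigma> u = {v. v < n \<and> \<sigma> u \<le> \<sigma> v}"

locale vertex_estimate = path_tree lam n adj \<Delta> "\<lambda>v. \<sigma> u \<le> \<sigma> v"
  for lam n adj \<Delta> and \<sigma> :: "nat \<Rightarrow> nat" and u +
  fixes \<epsilon> :: real and H :: nat
  assumes vertex: "u < n" and depth: "2 \<le> H"
    and depth_suffices: "2 * ln (1 + lam * \<Delta>) * contraction_rate lam \<Delta> ^ ((H - 1) div 2) \<le> \<epsilon> / (2 * exp 1)"
begin

lemma simple_path_root: "simple_path [u]"
  unfolding simple_path_def vertices_def using vertex by simp

lemma fst_xval: "fst (xval lam adj \<sigma> u h) = tree_value h [u]"
  unfolding xval_def tree_value_def by simp

lemma stop_cond_iff:
  "stop_cond lam \<epsilon> adj \<sigma> u h \<longleftrightarrow> 2 \<le> h \<and> \<bar>ln (tree_value h [u]) - ln (tree_value (h - 1) [u])\<bar> \<le> \<epsilon> / (2 * exp 1)"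
  unfolding stop_cond_def fst_xval ..

lemma stopping_depth:
  defines "h\<^sub>s \<equiv> LEAST h. stop_cond lam \<epsilon> adj \<sigma> u h"
  shows "Ex (stop_cond lam \<epsilon> adj \<sigma> u)" and "stop_cond lam \<epsilon> adj \<sigma> u h\<^sub>s" and "h\<^sub>s \<le> H"
proof -
  have "stop_cond lam \<epsilon> adj \<sigma> u H"
    unfolding stop_cond_iff using depth depth_suffices ln_tree_value_step_le[OF simple_path_root, of H]
    by simp
  then show "Ex (stop_cond lam \<epsilon> adj \<sigma> u)" "stop_cond lam \<epsilon> adj \<sigma> u h\<^sub>s" "h\<^sub>s \<le> H"
    unfolding h\<^sub>s_def by (auto intro: LeastI Least_le)
qed

lemma p_est_accurate:
  "1 / (1 + lam * \<Delta>) \<le> p_est lam \<epsilon> adj \<sigma> u \<and> p_est lam \<epsilon> adj \<sigma> u \<le> 1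
   \<and> \<bar>ln (p_est lam \<epsilon> adj \<sigma> u)
        - ln (Z_induced n adj lam (later_vertices n \<sigma> u - {u}) / Z_induced n adj lam (later_vertices n \<sigma> u))\<bar>
      \<le> \<epsilon> / (2 * exp 1)"
proof -
  define h\<^sub>s where "h\<^sub>s = (LEAST h. stop_cond lam \<epsilon> adj \<sigma> u h)"
  have p_est: "p_est lam \<epsilon> adj \<sigma> u = tree_value h\<^sub>s [u]"
    unfolding p_est_def h\<^sub>s_def using stopping_depth(1) by (simp add: fst_xval)
  have "gibbs_ratio [u] = Z_induced n adj lam (later_vertices n \<sigma> u - {u})
      / Z_induced n adj lam (later_vertices n \<sigma> u)"
    unfolding gibbs_ratio_def vertices_def later_vertices_def by simp
  moreover have "\<bar>ln (tree_value h\<^sub>s [u]) - ln (gibbs_ratio [u])\<bar> \<le> \<epsilon> / (2 * exp 1)"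
  proof -
    have "stop_cond lam \<epsilon> adj \<sigma> u h\<^sub>s" unfolding h\<^sub>s_def by (rule stopping_depth(2))
    then show ?thesis
      using ln_tree_value_error_le_step[OF simple_path_root, of h\<^sub>s] unfolding stop_cond_iff by auto
  qed
  ultimately show ?thesis
    unfolding p_est using tree_value_bounds[OF simple_path_root] by simp
qed

lemma queries_u_le: "\<exists>m. queries_u lam \<epsilon> adj \<sigma> u = enat m \<and> real m \<le> real H * (real \<Delta> + 2) ^ H"
proof -
  define h\<^sub>s where "h\<^sub>s = (LEAST h. stop_cond lam \<epsilon> adj \<sigma> u h)"
  have "(\<Sum>h\<in>{1..h\<^sub>s}. real (snd (xval lam adj \<sigma> u h))) \<le> (\<Sum>h\<in>{1..h\<^sub>s}. (real \<Delta> + 2) ^ H)"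
  proof (rule sum_mono)
    fix h assume "h \<in> {1..h\<^sub>s}"
    then have "(real \<Delta> + 2) ^ h \<le> (real \<Delta> + 2) ^ H"
      using stopping_depth(3) unfolding h\<^sub>s_def[symmetric] by (intro power_increasing) auto
    moreover have "real (snd (xval lam adj \<sigma> u h)) \<le> (real \<Delta> + 2) ^ h - 1"
      using tree_val_queries_le[OF simple_path_root, of h] by (simp add: xval_def)
    ultimately show "real (snd (xval lam adj \<sigma> u h)) \<le> (real \<Delta> + 2) ^ H" by linarith
  qed
  also have "\<dots> \<le> real H * (real \<Delta> + 2) ^ H"
    using stopping_depth(3) unfolding h\<^sub>s_def[symmetric] by (simp add: mult_right_mono)
  finally show ?thesis
    unfolding queries_u_def h\<^sub>s_def[symmetric] using stopping_depth(1) by simp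
qed

end

lemma ln_Z_telescoping:
  assumes \<sigma>: "\<sigma> permutes {..<n}" and lam: "lam \<ge> 0"
  shows "(\<Sum>u<n. - ln (Z_induced n adj lam (later_vertices n \<sigma> u - {u})
                     / Z_induced n adj lam (later_vertices n \<sigma> u)))
       = ln (Z n adj lam)"
proof -
  define L where "L k = ln (Z_induced n adj lam {v. v < n \<and> k \<le> \<sigma> v})" for k
  have \<sigma>_bij: "bij_betw \<sigma> {..<n} {..<n}" using \<sigma> by (rule permutes_imp_bij)
  have "later_vertices n \<sigma> u - {u} = {v. v < n \<and> Suc (\<sigma> u) \<le> \<sigma> v}" if "u < n" for u
    using that bij_betw_imp_inj_on[OF \<sigma>_bij] unfolding later_vertices_def
    by (auto simp: inj_on_eq_iff Suc_le_eq order.order_iff_strict)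
  then have "(\<Sum>u<n. - ln (Z_induced n adj lam (later_vertices n \<sigma> u - {u})
                     / Z_induced n adj lam (later_vertices n \<sigma> u)))
      = (\<Sum>u<n. L (\<sigma> u) - L (Suc (\<sigma> u)))"
    by (intro sum.cong refl)
      (simp add: L_def later_vertices_def ln_div Z_induced_pos[OF lam, THEN less_imp_neq, symmetric])
  also have "\<dots> = (\<Sum>k<n. L k - L (Suc k))"
    using sum.reindex_bij_betw[OF \<sigma>_bij, of "\<lambda>k. L k - L (Suc k)"] .
  also have "\<dots> = L 0 - L n" by (rule sum_lessThan_telescope')
  also have "L 0 = ln (Z n adj lam)" by (simp add: L_def Z_eq_Z_induced lessThan_def)
  also have "{v. v < n \<and> n \<le> \<sigma> v} = {}"
    using bij_betwE[OF \<sigma>_bij] by (auto simp: not_le)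
  then have "L n = 0" unfolding L_def by (simp only: Z_induced_empty ln_one)
  finally show ?thesis by simp
qed

definition lists_of_length :: "'a set \<Rightarrow> nat \<Rightarrow> 'a list set" where
  "lists_of_length A s = {xs. set xs \<subseteq> A \<and> length xs = s}"

lemma finite_lists_of_length: "finite A \<Longrightarrow> finite (lists_of_length A s)"
  unfolding lists_of_length_def by (rule finite_lists_length_eq)

lemma card_lists_of_length: "finite A \<Longrightarrow> card (lists_of_length A s) = card A ^ s"
  unfolding lists_of_length_def by (rule card_lists_length_eq)

lemma sum_lists_of_length_Suc:
  fixes g :: "'a list \<Rightarrow> 'b::comm_monoid_add"
  assumes "finite A"
  shows "(\<Sum>U\<in>lists_of_length A (Suc s). g U) = (\<Sum>x\<in>A. \<Sum>U\<in>lists_of_length A s. g (x # U))"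
proof -
  have "lists_of_length A (Suc s) = (\<lambda>(x, U). x # U) ` (A \<times> lists_of_length A s)"
  proof (intro equalityI subsetI)
    fix U assume "U \<in> lists_of_length A (Suc s)"
    then obtain x U' where "U = x # U'" "x \<in> A" "U' \<in> lists_of_length A s"
      unfolding lists_of_length_def by (cases U) auto
    then show "U \<in> (\<lambda>(x, U). x # U) ` (A \<times> lists_of_length A s)" by force
  qed (auto simp: lists_of_length_def)
  moreover have "inj_on (\<lambda>(x, U). x # U) (A \<times> lists_of_length A s)" by (rule inj_onI) auto
  ultimately show ?thesis by (simp add: sum.reindex sum.cartesian_product split_def)
qed

text \<open>The variance of a sum of \<open>s\<close> independent uniform samples of a centred \<open>Z\<close>, as a count
  over all \<open>card A ^ s\<close> sample lists.\<close>
lemma sum_lists_of_length_sum_sq: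
  fixes Z :: "'a \<Rightarrow> real"
  assumes fin: "finite A" and centred: "(\<Sum>x\<in>A. Z x) = 0"
  shows "real (card A) * (\<Sum>U\<in>lists_of_length A s. (\<Sum>x\<leftarrow>U. Z x)\<^sup>2)
       = real s * real (card A) ^ s * (\<Sum>x\<in>A. (Z x)\<^sup>2)"
proof (induction s)
  case 0
  have "lists_of_length A 0 = {[]}" unfolding lists_of_length_def by auto
  then show ?case by simp
next
  case (Suc s)
  define T where "T U = (\<Sum>x\<leftarrow>U. Z x)" for U
  define c where "c = real (card A)"
  have "(\<Sum>U\<in>lists_of_length A (Suc s). (T U)\<^sup>2)
      = (\<Sum>x\<in>A. \<Sum>U\<in>lists_of_length A s. (Z x)\<^sup>2 + 2 * Z x * T U + (T U)\<^sup>2)"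
    unfolding sum_lists_of_length_Suc[OF fin] T_def by (simp add: power2_sum ac_simps)
  also have "\<dots> = c ^ s * (\<Sum>x\<in>A. (Z x)\<^sup>2) + 2 * (\<Sum>x\<in>A. Z x) * (\<Sum>U\<in>lists_of_length A s. T U)
      + c * (\<Sum>U\<in>lists_of_length A s. (T U)\<^sup>2)"
    using card_lists_of_length[OF fin, of s]
    by (simp add: c_def sum.distrib sum_distrib_left sum_distrib_right mult_ac)
  finally show ?case
    using Suc.IH centred unfolding T_def[symmetric] c_def[symmetric] by (simp add: algebra_simps)
qed

lemma card_abs_gt_le_sum_sq:
  fixes f :: "'a \<Rightarrow> real"
  assumes "finite L" "t > 0"
  shows "real (card {x \<in> L. t < \<bar>f x\<bar>}) \<le> (\<Sum>x\<in>L. (f x)\<^sup>2) / t\<^sup>2"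
proof -
  have "real (card {x \<in> L. t < \<bar>f x\<bar>}) * t\<^sup>2 = (\<Sum>x\<in>{x \<in> L. t < \<bar>f x\<bar>}. t\<^sup>2)" by simp
  also have "\<dots> \<le> (\<Sum>x\<in>{x \<in> L. t < \<bar>f x\<bar>}. (f x)\<^sup>2)"
    using assms(2) by (intro sum_mono) (simp flip: abs_le_square_iff)
  also have "\<dots> \<le> (\<Sum>x\<in>L. (f x)\<^sup>2)" using assms(1) by (intro sum_mono2) auto
  finally show ?thesis using assms(2) by (simp add: le_divide_eq)
qed

lemma sum_lists_of_length_centred_sq_le:
  fixes Y :: "nat \<Rightarrow> real"
  assumes n: "n \<ge> 1" and Y: "\<And>u. u < n \<Longrightarrow> 0 \<le> Y u \<and> Y u \<le> B"
  shows "(\<Sum>U\<in>lists_of_length {..<n} s. (\<Sum>u\<leftarrow>U. Y u - (\<Sum>v<n. Y v) / n)\<^sup>2) \<le> real s * real n ^ s * B\<^sup>2"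
proof -
  define \<mu> where "\<mu> = (\<Sum>v<n. Y v) / n"
  have "0 \<le> (\<Sum>u<n. Y u)" "(\<Sum>u<n. Y u) \<le> n * B"
    using Y sum_mono[of "{..<n}" Y "\<lambda>_. B"] by (auto intro: sum_nonneg)
  then have "0 \<le> \<mu>" "\<mu> \<le> B" using n by (auto simp: \<mu>_def divide_le_eq mult.commute)
  then have "(Y u - \<mu>)\<^sup>2 \<le> B\<^sup>2" if "u < n" for u
    using Y[OF that] by (intro power2_le_iff_abs_le[THEN iffD2]) auto
  then have sum_sq: "(\<Sum>u<n. (Y u - \<mu>)\<^sup>2) \<le> n * B\<^sup>2"
    using sum_mono[of "{..<n}" "\<lambda>u. (Y u - \<mu>)\<^sup>2" "\<lambda>_. B\<^sup>2"] by simp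
  have "(\<Sum>u<n. Y u - \<mu>) = 0" unfolding \<mu>_def using n by (simp add: sum_subtractf)
  then have "real n * (\<Sum>U\<in>lists_of_length {..<n} s. (\<Sum>u\<leftarrow>U. Y u - \<mu>)\<^sup>2)
      = real s * real n ^ s * (\<Sum>u<n. (Y u - \<mu>)\<^sup>2)"
    using sum_lists_of_length_sum_sq[of "{..<n}" "\<lambda>u. Y u - \<mu>" s] by simp
  also have "\<dots> \<le> real n * (real s * real n ^ s * B\<^sup>2)"
    using mult_left_mono[OF sum_sq, of "real s * real n ^ s"] by (simp add: mult_ac)
  finally show ?thesis using n unfolding \<mu>_def by simp
qed

text \<open>Chebyshev's inequality for the sample mean, by counting sample lists.\<close>
lemma sample_mean_concentration:
  fixes Y :: "nat \<Rightarrow> real"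
  assumes n: "n \<ge> 1" and Y: "\<And>u. u < n \<Longrightarrow> 0 \<le> Y u \<and> Y u \<le> B" and s: "s \<ge> 1"
    and eps: "\<epsilon> > 0" and many: "12 * B\<^sup>2 \<le> real s * \<epsilon>\<^sup>2"
  shows "2 / 3 * real (card (lists_of_length {..<n} s))
    \<le> real (card {U \<in> lists_of_length {..<n} s.
         \<bar>real n / real s * (\<Sum>u\<leftarrow>U. Y u) - (\<Sum>u<n. Y u)\<bar> \<le> \<epsilon> * n / 2})"
proof -
  define L where "L = lists_of_length {..<n} s"
  define Z where "Z u = Y u - (\<Sum>v<n. Y v) / n" for u
  define bad where "bad = {U \<in> L. real s * \<epsilon> / 2 < \<bar>\<Sum>u\<leftarrow>U. Z u\<bar>}"
  have finite: "finite L" and card_L: "card L = n ^ s"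
    by (simp_all add: L_def finite_lists_of_length card_lists_of_length)
  have "B\<^sup>2 \<le> real s * \<epsilon>\<^sup>2 / 12" using many by simp
  then have second_moment: "(\<Sum>U\<in>L. (\<Sum>u\<leftarrow>U. Z u)\<^sup>2) \<le> real s * real n ^ s * (real s * \<epsilon>\<^sup>2 / 12)"
    using sum_lists_of_length_centred_sq_le[OF n Y, where s = s] unfolding L_def Z_def
    by (meson mult_left_mono of_nat_0_le_iff order_trans zero_le_mult_iff zero_le_power)
  have "real (card bad) \<le> (\<Sum>U\<in>L. (\<Sum>u\<leftarrow>U. Z u)\<^sup>2) / (real s * \<epsilon> / 2)\<^sup>2"
    unfolding bad_def by (rule card_abs_gt_le_sum_sq[OF finite]) (use s eps in simp)
  also have "\<dots> \<le> real s * real n ^ s * (real s * \<epsilon>\<^sup>2 / 12) / (real s * \<epsilon> / 2)\<^sup>2"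
    using second_moment by (rule divide_right_mono) simp
  also have "\<dots> = real (card L) / 3"
    using s eps unfolding card_L by (simp add: power2_eq_square field_simps)
  finally have card_bad: "real (card bad) \<le> real (card L) / 3" .
  have deviation: "\<bar>real n / real s * (\<Sum>u\<leftarrow>U. Y u) - (\<Sum>u<n. Y u)\<bar> = real n / real s * \<bar>\<Sum>u\<leftarrow>U. Z u\<bar>"
    if "U \<in> L" for U
  proof -
    have "length U = s" using that unfolding L_def lists_of_length_def by simp
    then have "(\<Sum>u\<leftarrow>U. Z u) = (\<Sum>u\<leftarrow>U. Y u) - real s * ((\<Sum>v<n. Y v) / n)"
      unfolding Z_def by (simp add: sum_list_subtractf sum_list_triv)
    then have "real n / real s * (\<Sum>u\<leftarrow>U. Y u) - (\<Sum>u<n. Y u) = real n / real s * (\<Sum>u\<leftarrow>U. Z u)"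
      using n s by (simp add: field_simps)
    then show ?thesis by (simp add: abs_mult)
  qed
  have scale: "real n / real s * x \<le> \<epsilon> * n / 2 \<longleftrightarrow> x \<le> real s * \<epsilon> / 2" for x
    using n s by (simp add: field_simps)
  have "\<bar>real n / real s * (\<Sum>u\<leftarrow>U. Y u) - (\<Sum>u<n. Y u)\<bar> \<le> \<epsilon> * n / 2 \<longleftrightarrow> U \<notin> bad"
    if "U \<in> L" for U
    using that unfolding deviation[OF that] scale bad_def by auto
  then have "{U \<in> L. \<bar>real n / real s * (\<Sum>u\<leftarrow>U. Y u) - (\<Sum>u<n. Y u)\<bar> \<le> \<epsilon> * n / 2} = L - bad"
    by (intro set_eqI) (simp only: mem_Collect_eq Diff_iff, blast)
  moreover have "real (card (L - bad)) = real (card L) - real (card bad)"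
    using finite by (simp add: bad_def card_Diff_subset card_mono of_nat_diff finite_subset)
  ultimately have "real (card {U \<in> L. \<bar>real n / real s * (\<Sum>u\<leftarrow>U. Y u) - (\<Sum>u<n. Y u)\<bar> \<le> \<epsilon> * n / 2})
      = real (card L) - real (card bad)" by simp
  then show ?thesis using card_bad unfolding L_def by linarith
qed

lemma pair_pmf_of_set:
  assumes "finite A" "A \<noteq> {}" "finite B" "B \<noteq> {}"
  shows "pair_pmf (pmf_of_set A) (pmf_of_set B) = pmf_of_set (A \<times> B)"
proof (rule pmf_eqI)
  fix p :: "'a \<times> 'b"
  show "pmf (pair_pmf (pmf_of_set A) (pmf_of_set B)) p = pmf (pmf_of_set (A \<times> B)) p"
    using assms by (cases p) (simp add: pmf_pair card_cartesian_product indicator_def)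
qed

lemma prob_pair_pmf_of_set_ge:
  fixes E :: "('a \<times> 'b) set"
  assumes A: "finite A" "A \<noteq> {}" and B: "finite B" "B \<noteq> {}"
    and good: "\<And>a. a \<in> A \<Longrightarrow> c * real (card B) \<le> real (card {b \<in> B. (a, b) \<in> E})"
  shows "measure_pmf.prob (pair_pmf (pmf_of_set A) (pmf_of_set B)) E \<ge> c"
proof -
  have "(A \<times> B) \<inter> E = (SIGMA a:A. {b \<in> B. (a, b) \<in> E})" by auto
  then have "real (card ((A \<times> B) \<inter> E)) = (\<Sum>a\<in>A. real (card {b \<in> B. (a, b) \<in> E}))"
    using A B by (simp add: card_SigmaI)
  also have "\<dots> \<ge> c * (real (card A) * real (card B))"
    using sum_mono[OF good] by (simp add: mult_ac)
  finally show ?thesis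
    using A B by (simp add: pair_pmf_of_set measure_pmf_of_set card_cartesian_product
        le_divide_eq card_gt_0_iff)
qed

text \<open>A depth of order \<open>sqrt (lam * \<Delta>) * ln (1 / \<epsilon>)\<close> at which the stopping rule of
  every vertex has fired.\<close>
definition depth_bound :: "real \<Rightarrow> nat \<Rightarrow> real \<Rightarrow> nat" where
  "depth_bound lam \<Delta> \<epsilon> =
     2 * nat \<lceil>(ln (4 * exp 1 * ln (1 + lam * \<Delta>) + 1) + ln (1 / \<epsilon>)) * (1 + sqrt (lam * \<Delta>))\<rceil> + 1"

lemma depth_bound_suffices:
  assumes lam: "lam > 0" and eps: "0 < \<epsilon>" "\<epsilon> < 1"
  shows "2 \<le> depth_bound lam \<Delta> \<epsilon>"
    and "2 * ln (1 + lam * \<Delta>) * contraction_rate lam \<Delta> ^ ((depth_bound lam \<Delta> \<epsilon> - 1) div 2)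
           \<le> \<epsilon> / (2 * exp 1)"
proof -
  define B where "B = ln (1 + lam * \<Delta>)"
  define L0 where "L0 = ln (4 * exp 1 * B + 1)"
  define r where "r = sqrt (lam * \<Delta>)"
  define m where "m = nat \<lceil>(L0 + ln (1 / \<epsilon>)) * (1 + r)\<rceil>"
  have H: "depth_bound lam \<Delta> \<epsilon> = 2 * m + 1"
    unfolding depth_bound_def m_def L0_def B_def r_def ..
  have B: "B \<ge> 0" and r: "r \<ge> 0" and L0: "L0 \<ge> 0" and l: "ln (1 / \<epsilon>) > 0"
    using lam eps by (simp_all add: B_def r_def L0_def)
  have m: "real m \<ge> (L0 + ln (1 / \<epsilon>)) * (1 + r)" unfolding m_def by linarith
  have "(L0 + ln (1 / \<epsilon>)) * (1 + r) > 0" using L0 l r by (simp add: add_nonneg_pos)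
  then have "m \<ge> 1" unfolding m_def by linarith
  then show "2 \<le> depth_bound lam \<Delta> \<epsilon>" unfolding H by simp
  define \<gamma> where "\<gamma> = 1 / (1 + r)"
  have \<gamma>: "0 < \<gamma>" "\<gamma> \<le> 1" using r by (simp_all add: \<gamma>_def)
  have rate: "contraction_rate lam \<Delta> = 1 - \<gamma>" unfolding \<gamma>_def contraction_rate_def r_def ..
  have "\<gamma> * real m \<ge> L0 + ln (1 / \<epsilon>)"
    using m r unfolding \<gamma>_def by (simp add: field_simps)
  have "(1 - \<gamma>) ^ m \<le> exp (- \<gamma>) ^ m"
    using \<gamma> exp_ge_add_one_self[of "-\<gamma>"] by (intro power_mono) auto
  also have "\<dots> = exp (- (\<gamma> * real m))" by (simp add: exp_of_nat_mult[symmetric] mult.commute)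
  also have "\<dots> \<le> exp (- (L0 + ln (1 / \<epsilon>)))" using \<open>\<gamma> * real m \<ge> _\<close> by simp
  also have "\<dots> = \<epsilon> / (4 * exp 1 * B + 1)" unfolding L0_def using eps B
    by (simp add: exp_diff exp_minus ln_div add_pos_nonneg field_simps)
  finally have "2 * B * (1 - \<gamma>) ^ m \<le> 2 * B * (\<epsilon> / (4 * exp 1 * B + 1))"
    using B by (intro mult_left_mono) auto
  also have "\<dots> \<le> \<epsilon> / (2 * exp 1)"
    using B eps by (simp add: field_simps add_pos_nonneg)
  finally show "2 * ln (1 + lam * \<Delta>) * contraction_rate lam \<Delta> ^ ((depth_bound lam \<Delta> \<epsilon> - 1) div 2)
      \<le> \<epsilon> / (2 * exp 1)"
    unfolding H rate B_def by simp
qed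

lemma depth_bound_le:
  assumes lam: "lam > 0" and eps: "0 < \<epsilon>" "\<epsilon> < 1"
  shows "real (depth_bound lam \<Delta> \<epsilon>)
    \<le> (2 * (1 + sqrt (lam * \<Delta>)) * ln (4 * exp 1 * ln (1 + lam * \<Delta>) + 1) + 3)
       + 2 * (1 + sqrt (lam * \<Delta>)) * ln (1 / \<epsilon>)"
proof -
  define x where "x = (ln (4 * exp 1 * ln (1 + lam * \<Delta>) + 1) + ln (1 / \<epsilon>)) * (1 + sqrt (lam * \<Delta>))"
  have "x \<ge> 0" unfolding x_def using lam eps by (intro mult_nonneg_nonneg add_nonneg_nonneg) auto
  then have "real (nat \<lceil>x\<rceil>) \<le> x + 1" using ceiling_correct[of x] by (simp add: of_nat_nat)
  then have "real (depth_bound lam \<Delta> \<epsilon>) \<le> 2 * x + 3" unfolding depth_bound_def x_def[symmetric] by simp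
  then show ?thesis unfolding x_def by (simp add: algebra_simps)
qed

lemma num_samples_le:
  assumes C: "C > 0" and eps: "0 < \<epsilon>" "\<epsilon> < 1"
  shows "real (num_samples C \<epsilon>) \<le> (C + 1) * (1 / \<epsilon>) powr 2"
proof -
  have "real (num_samples C \<epsilon>) \<le> C / \<epsilon>\<^sup>2 + 1"
    unfolding num_samples_def using C eps by (simp add: of_nat_nat)
  also have "\<dots> \<le> (C + 1) / \<epsilon>\<^sup>2" using eps C by (simp add: field_simps power_le_one)
  finally show ?thesis using eps by (simp add: powr_numeral divide_inverse power_inverse)
qed

lemma queries_shape_le:
  fixes \<alpha> \<beta> b c :: real
  assumes eps: "0 < \<epsilon>" "\<epsilon> < 1" and \<alpha>: "\<alpha> \<ge> 0" and \<beta>: "\<beta> \<ge> 0" and b: "b \<ge> 1"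
    and H: "real H \<le> \<alpha> + \<beta> * ln (1 / \<epsilon>)" and s: "real s \<le> c * (1 / \<epsilon>) powr 2"
  shows "real s * (real H * b ^ H)
    \<le> c * (\<alpha> + \<beta>) * b powr \<alpha> * (1 / \<epsilon>) powr (2 + \<beta> * ln b) * (2 + ln (1 / \<epsilon>))"
proof -
  define l where "l = ln (1 / \<epsilon>)"
  have l: "l \<ge> 0" unfolding l_def using eps by simp
  have "\<alpha> + \<beta> * l \<le> (\<alpha> + \<beta>) * (2 + l)"
    using mult_nonneg_nonneg[OF \<alpha> l] \<alpha> \<beta> by (simp add: algebra_simps)
  then have "real H \<le> (\<alpha> + \<beta>) * (2 + l)" using H unfolding l_def by linarith
  moreover have "b ^ H \<le> b powr \<alpha> * (1 / \<epsilon>) powr (\<beta> * ln b)"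
  proof -
    have "b ^ H = b powr real H" using b by (simp add: powr_realpow)
    also have "\<dots> \<le> b powr (\<alpha> + \<beta> * l)" using b H unfolding l_def by (intro powr_mono) auto
    also have "\<dots> = b powr \<alpha> * (1 / \<epsilon>) powr (\<beta> * ln b)"
      using b eps unfolding l_def by (simp add: powr_def exp_add[symmetric] algebra_simps)
    finally show ?thesis .
  qed
  moreover have "0 \<le> c * (1 / \<epsilon>) powr 2" using s by (meson of_nat_0_le_iff order_trans)
  ultimately have "real s * (real H * b ^ H)
      \<le> (c * (1 / \<epsilon>) powr 2) * (((\<alpha> + \<beta>) * (2 + l)) * (b powr \<alpha> * (1 / \<epsilon>) powr (\<beta> * ln b)))"
    using s b \<alpha> \<beta> l by (intro mult_mono) auto
  also have "\<dots> = c * (\<alpha> + \<beta>) * b powr \<alpha> * (1 / \<epsilon>) powr (2 + \<beta> * ln b) * (2 + l)"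
    by (simp add: powr_add mult_ac)
  finally show ?thesis unfolding l_def .
qed

lemma vertex_estimate_depth_bound:
  assumes "lam > 0" "multigraph n adj" "max_degree_le n adj \<Delta>" "u < n" "0 < \<epsilon>" "\<epsilon> < 1"
  shows "vertex_estimate lam n adj \<Delta> u \<epsilon> (depth_bound lam \<Delta> \<epsilon>)"
  using assms depth_bound_suffices[of lam \<epsilon> \<Delta>] by unfold_locales auto

lemma neg_ln_p_est_bounds:
  assumes "lam > 0" "multigraph n adj" "max_degree_le n adj \<Delta>" "u < n" "0 < \<epsilon>" "\<epsilon> < 1"
  shows "0 \<le> - ln (p_est lam \<epsilon> adj \<sigma> u) \<and> - ln (p_est lam \<epsilon> adj \<sigma> u) \<le> ln (1 + lam * \<Delta>)"
proof -
  have p: "1 / (1 + lam * \<Delta>) \<le> p_est lam \<epsilon> adj \<sigma> u" "p_est lam \<epsilon> adj \<sigma> u \<le> 1"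
    using vertex_estimate.p_est_accurate[OF vertex_estimate_depth_bound[OF assms]] by auto
  have q: "0 < 1 / (1 + lam * \<Delta>)" using assms(1) by (simp add: add_pos_nonneg)
  then have pos: "0 < p_est lam \<epsilon> adj \<sigma> u" using p(1) by linarith
  have "ln (1 / (1 + lam * \<Delta>)) \<le> ln (p_est lam \<epsilon> adj \<sigma> u)"
    using ln_le_cancel_iff[OF q pos] p(1) by simp
  moreover have "ln (p_est lam \<epsilon> adj \<sigma> u) \<le> 0" using pos p(2) by simp
  moreover have "ln (1 / (1 + lam * \<Delta>)) = - ln (1 + lam * \<Delta>)"
    using assms(1) by (simp add: ln_div add_pos_nonneg)
  ultimately show ?thesis by linarith
qed

lemma sum_neg_ln_p_est_close:
  assumes lam: "lam > 0" and mg: "multigraph n adj" and md: "max_degree_le n adj \<Delta>"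
    and eps: "0 < \<epsilon>" "\<epsilon> < 1" and \<sigma>: "\<sigma> permutes {..<n}"
  shows "\<bar>(\<Sum>u<n. - ln (p_est lam \<epsilon> adj \<sigma> u)) - ln (Z n adj lam)\<bar> \<le> \<epsilon> * n / 2"
proof -
  define R where "R u = Z_induced n adj lam (later_vertices n \<sigma> u - {u})
    / Z_induced n adj lam (later_vertices n \<sigma> u)" for u
  have "\<bar>(\<Sum>u<n. - ln (p_est lam \<epsilon> adj \<sigma> u)) - ln (Z n adj lam)\<bar>
      = \<bar>\<Sum>u<n. ln (R u) - ln (p_est lam \<epsilon> adj \<sigma> u)\<bar>"
    using ln_Z_telescoping[OF \<sigma>, of lam adj] lam unfolding R_def[symmetric]
    by (simp add: sum_subtractf sum_negf)
  also have "\<dots> \<le> (\<Sum>u<n. \<bar>ln (R u) - ln (p_est lam \<epsilon> adj \<sigma> u)\<bar>)" by (rule sum_abs)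
  also have "\<dots> \<le> (\<Sum>u<n. \<epsilon> / (2 * exp 1))"
    using vertex_estimate.p_est_accurate[OF vertex_estimate_depth_bound[OF lam mg md _ eps]]
    unfolding R_def by (intro sum_mono) (simp add: abs_minus_commute)
  also have "\<dots> = real n * (\<epsilon> / (2 * exp 1))" by simp
  also have "\<dots> \<le> real n * (\<epsilon> / 2)" using eps by (intro mult_left_mono divide_left_mono) auto
  finally show ?thesis by (simp add: mult.commute)
qed

lemma apf_run_eq:
  "apf_run lam \<epsilon> C n = pair_pmf (pmf_of_set {\<sigma>. \<sigma> permutes {..<n}})
     (pmf_of_set (lists_of_length {..<n} (num_samples C \<epsilon>)))"
  unfolding apf_run_def order_pmf_def sample_pmf_def lists_of_length_def by (simp add: conj_commute)

lemma nonempty_permutations: "{\<sigma>. \<sigma> permutes S} \<noteq> {}"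
  using permutes_id by blast

lemma finite_permutations_lessThan: "finite {\<sigma>. \<sigma> permutes {..<n::nat}}"
  by (rule finite_permutations) simp

lemma nonempty_lists_of_length: "n \<ge> 1 \<Longrightarrow> lists_of_length {..<n::nat} s \<noteq> {}"
proof -
  assume "n \<ge> 1"
  then have "replicate s 0 \<in> lists_of_length {..<n} s" by (cases s) (auto simp: lists_of_length_def)
  then show ?thesis by blast
qed

lemma apf_output_accurate:
  assumes lam: "lam > 0" and mg: "multigraph n adj" and md: "max_degree_le n adj \<Delta>"
    and n: "n \<ge> 1" and eps: "0 < \<epsilon>" "\<epsilon> < 1" and C: "C > 0" "12 * (ln (1 + lam * \<Delta>))\<^sup>2 \<le> C"
  shows "measure_pmf.prob (apf_run lam \<epsilon> C n)
           {(\<sigma>, U). \<bar>apf_output lam \<epsilon> C n adj \<sigma> U - ln (Z n adj lam)\<bar> \<le> \<epsilon> * real n} \<ge> 2 / 3"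
  unfolding apf_run_eq
proof (rule prob_pair_pmf_of_set_ge[OF finite_permutations_lessThan nonempty_permutations
      finite_lists_of_length[OF finite_lessThan] nonempty_lists_of_length[OF n]])
  fix \<sigma> assume "\<sigma> \<in> {\<sigma>. \<sigma> permutes {..<n}}"
  then have \<sigma>: "\<sigma> permutes {..<n}" by simp
  define s where "s = num_samples C \<epsilon>"
  define Y where "Y u = - ln (p_est lam \<epsilon> adj \<sigma> u)" for u
  have s: "real s \<ge> C / \<epsilon>\<^sup>2" unfolding s_def num_samples_def by linarith
  then have "C \<le> real s * \<epsilon>\<^sup>2" using eps by (simp add: divide_le_eq)
  moreover have "0 < C / \<epsilon>\<^sup>2" using C eps by simp
  then have "0 < real s" using s by linarith
  then have "s \<ge> 1" by simp
  ultimately have sample_mean: "2 / 3 * real (card (lists_of_length {..<n} s))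
    \<le> real (card {U \<in> lists_of_length {..<n} s.
         \<bar>real n / real s * (\<Sum>u\<leftarrow>U. Y u) - (\<Sum>u<n. Y u)\<bar> \<le> \<epsilon> * n / 2})"
    using neg_ln_p_est_bounds[OF lam mg md _ eps] C
    by (intro sample_mean_concentration[OF n _ _ eps(1)]) (auto simp: Y_def)
  have "\<bar>apf_output lam \<epsilon> C n adj \<sigma> U - ln (Z n adj lam)\<bar> \<le> \<epsilon> * real n"
    if "\<bar>real n / real s * (\<Sum>u\<leftarrow>U. Y u) - (\<Sum>u<n. Y u)\<bar> \<le> \<epsilon> * n / 2" for U
    using that sum_neg_ln_p_est_close[OF lam mg md eps \<sigma>]
    unfolding apf_output_def Y_def s_def abs_le_iff by linarith
  then have "card {U \<in> lists_of_length {..<n} s.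
         \<bar>real n / real s * (\<Sum>u\<leftarrow>U. Y u) - (\<Sum>u<n. Y u)\<bar> \<le> \<epsilon> * n / 2}
      \<le> card {U \<in> lists_of_length {..<n} s. (\<sigma>, U) \<in>
          {(\<sigma>, U). \<bar>apf_output lam \<epsilon> C n adj \<sigma> U - ln (Z n adj lam)\<bar> \<le> \<epsilon> * real n}}"
    using finite_lists_of_length[OF finite_lessThan, of n s] by (intro card_mono) auto
  then show "2 / 3 * real (card (lists_of_length {..<n} (num_samples C \<epsilon>)))
      \<le> real (card {U \<in> lists_of_length {..<n} (num_samples C \<epsilon>). (\<sigma>, U) \<in>
          {(\<sigma>, U). \<bar>apf_output lam \<epsilon> C n adj \<sigma> U - ln (Z n adj lam)\<bar> \<le> \<epsilon> * real n}})"
    using sample_mean unfolding s_def by linarith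
qed

lemma apf_queries_le:
  assumes lam: "lam > 0" and mg: "multigraph n adj" and md: "max_degree_le n adj \<Delta>"
    and n: "n \<ge> 1" and eps: "0 < \<epsilon>" "\<epsilon> < 1" and run: "(\<sigma>, U) \<in> set_pmf (apf_run lam \<epsilon> C n)"
  defines "H \<equiv> depth_bound lam \<Delta> \<epsilon>"
  shows "\<exists>m. apf_queries lam \<epsilon> adj \<sigma> U = enat m \<and>
    real m \<le> real (num_samples C \<epsilon>) * (real H * (real \<Delta> + 2) ^ H)"
proof -
  have U: "set U \<subseteq> {..<n}" "length U = num_samples C \<epsilon>"
    using run nonempty_lists_of_length[OF n] finite_lists_of_length[of "{..<n}"]
      finite_permutations_lessThan nonempty_permutations
    unfolding apf_run_eq by (auto simp: lists_of_length_def)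
  define g where "g u = the_enat (queries_u lam \<epsilon> adj \<sigma> u)" for u
  have g: "queries_u lam \<epsilon> adj \<sigma> u = of_nat (g u) \<and> real (g u) \<le> real H * (real \<Delta> + 2) ^ H"
    if "u \<in> set U" for u
  proof -
    have "u < n" using U(1) that by auto
    then obtain m where "queries_u lam \<epsilon> adj \<sigma> u = enat m" "real m \<le> real H * (real \<Delta> + 2) ^ H"
      using vertex_estimate.queries_u_le[OF vertex_estimate_depth_bound[OF lam mg md _ eps], of u \<sigma>]
      unfolding H_def by auto
    then show ?thesis unfolding g_def by (simp add: of_nat_eq_enat)
  qed
  then have "map (queries_u lam \<epsilon> adj \<sigma>) U = map of_nat (map g U)"
    unfolding map_map comp_def by (intro map_cong) auto
  then have "apf_queries lam \<epsilon> adj \<sigma> U = enat (\<Sum>u\<leftarrow>U. g u)"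
    unfolding apf_queries_def by (simp only: sum_list_of_nat of_nat_eq_enat)
  moreover have "real (\<Sum>u\<leftarrow>U. g u) \<le> real (num_samples C \<epsilon>) * (real H * (real \<Delta> + 2) ^ H)"
  proof -
    have "real (\<Sum>u\<leftarrow>U. g u) = (\<Sum>u\<leftarrow>U. real (g u))" by (induction U) auto
    also have "\<dots> \<le> (\<Sum>u\<leftarrow>U. real H * (real \<Delta> + 2) ^ H)" using g by (intro sum_list_mono) auto
    finally show ?thesis using U(2) by (simp add: sum_list_triv)
  qed
  ultimately show ?thesis by blast
qed

lemma query_exponent_le:
  assumes lam: "lam > 0"
  shows "2 + 2 * (1 + sqrt (lam * \<Delta>)) * ln (real \<Delta> + 2)
    \<le> (2 * (1 + sqrt lam) + 4) * sqrt (real \<Delta> + 2) * ln (real \<Delta> + 2)"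
proof -
  have ln: "ln (real \<Delta> + 2) \<ge> 2 / 3" using ln2_ge_two_thirds by (smt (verit) ln_le_cancel_iff of_nat_0_le_iff)
  have sq: "sqrt (real \<Delta> + 2) \<ge> 1" by simp
  have "sqrt (lam * \<Delta>) \<le> sqrt lam * sqrt (real \<Delta> + 2)"
    using lam by (simp add: real_sqrt_mult)
  with sq have "1 + sqrt (lam * \<Delta>) \<le> sqrt (real \<Delta> + 2) + sqrt lam * sqrt (real \<Delta> + 2)"
    by linarith
  then have "1 + sqrt (lam * \<Delta>) \<le> (1 + sqrt lam) * sqrt (real \<Delta> + 2)"
    by (simp add: distrib_right)
  then have "2 * (1 + sqrt (lam * \<Delta>)) * ln (real \<Delta> + 2)
      \<le> 2 * ((1 + sqrt lam) * sqrt (real \<Delta> + 2)) * ln (real \<Delta> + 2)"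
    using ln by (intro mult_right_mono) auto
  moreover have "2 \<le> 4 * sqrt (real \<Delta> + 2) * ln (real \<Delta> + 2)"
    using mult_mono[OF sq ln] by simp
  ultimately show ?thesis by (simp add: algebra_simps)
qed

definition query_constant :: "real \<Rightarrow> nat \<Rightarrow> real \<Rightarrow> real" where
  "query_constant lam \<Delta> C =
     (let \<beta> = 2 * (1 + sqrt (lam * \<Delta>)); \<alpha> = \<beta> * ln (4 * exp 1 * ln (1 + lam * \<Delta>) + 1) + 3
      in (C + 1) * (\<alpha> + \<beta>) * (real \<Delta> + 2) powr \<alpha>)"

lemma queries_total_le:
  assumes lam: "lam > 0" and C: "C > 0" and eps: "0 < \<epsilon>" "\<epsilon> < 1"
  shows "real (num_samples C \<epsilon>) * (real (depth_bound lam \<Delta> \<epsilon>) * (real \<Delta> + 2) ^ depth_bound lam \<Delta> \<epsilon>)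
    \<le> query_constant lam \<Delta> C * (1 / \<epsilon>) powr ((2 * (1 + sqrt lam) + 4) * sqrt (real \<Delta> + 2) * ln (real \<Delta> + 2))
       * (2 + ln (1 / \<epsilon>))"
proof -
  define \<beta> where "\<beta> = 2 * (1 + sqrt (lam * \<Delta>))"
  define \<alpha> where "\<alpha> = \<beta> * ln (4 * exp 1 * ln (1 + lam * \<Delta>) + 1) + 3"
  have \<beta>: "\<beta> \<ge> 0" and \<alpha>: "\<alpha> \<ge> 0" using lam by (simp_all add: \<alpha>_def \<beta>_def)
  have K: "query_constant lam \<Delta> C = (C + 1) * (\<alpha> + \<beta>) * (real \<Delta> + 2) powr \<alpha>"
    unfolding query_constant_def \<alpha>_def \<beta>_def Let_def ..
  have "real (num_samples C \<epsilon>) * (real (depth_bound lam \<Delta> \<epsilon>) * (real \<Delta> + 2) ^ depth_bound lam \<Delta> \<epsilon>)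
      \<le> query_constant lam \<Delta> C * (1 / \<epsilon>) powr (2 + \<beta> * ln (real \<Delta> + 2)) * (2 + ln (1 / \<epsilon>))"
    unfolding K
    by (rule queries_shape_le[OF eps \<alpha> \<beta> _ depth_bound_le[OF lam eps, of \<Delta>, folded \<beta>_def, folded \<alpha>_def]
        num_samples_le[OF C eps]]) simp
  also have "\<dots> \<le> query_constant lam \<Delta> C
      * (1 / \<epsilon>) powr ((2 * (1 + sqrt lam) + 4) * sqrt (real \<Delta> + 2) * ln (real \<Delta> + 2)) * (2 + ln (1 / \<epsilon>))"
    using query_exponent_le[OF lam, of \<Delta>] eps C \<alpha> \<beta> unfolding K \<beta>_def
    by (intro mult_right_mono mult_left_mono powr_mono) auto
  finally show ?thesis .
qed

lemma apf_guarantee: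
  assumes lam: "lam > 0"
  shows "\<exists>C K. C > 0 \<and>
    (\<forall>\<epsilon> n adj. 0 < \<epsilon> \<and> \<epsilon> < 1 \<and> 1 \<le> n \<and> multigraph n adj \<and> max_degree_le n adj \<Delta> \<longrightarrow>
       measure_pmf.prob (apf_run lam \<epsilon> C n)
          {(\<sigma>, U). \<bar>apf_output lam \<epsilon> C n adj \<sigma> U - ln (Z n adj lam)\<bar> \<le> \<epsilon> * real n} \<ge> 2/3 \<and>
       (\<forall>(\<sigma>, U) \<in> set_pmf (apf_run lam \<epsilon> C n).
          \<exists>m::nat. apf_queries lam \<epsilon> adj \<sigma> U = enat m \<and>
            real m \<le> K * (1 / \<epsilon>) powr ((2 * (1 + sqrt lam) + 4) * sqrt (real \<Delta> + 2) * ln (real \<Delta> + 2))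
                          * (2 + ln (1 / \<epsilon>))))"
proof -
  define C where "C = 12 * (ln (1 + lam * \<Delta>))\<^sup>2 + 1"
  have C: "C > 0" "12 * (ln (1 + lam * \<Delta>))\<^sup>2 \<le> C"
    unfolding C_def by (simp_all add: add_nonneg_pos)
  have "measure_pmf.prob (apf_run lam \<epsilon> C n)
          {(\<sigma>, U). \<bar>apf_output lam \<epsilon> C n adj \<sigma> U - ln (Z n adj lam)\<bar> \<le> \<epsilon> * real n} \<ge> 2/3 \<and>
       (\<forall>(\<sigma>, U) \<in> set_pmf (apf_run lam \<epsilon> C n).
          \<exists>m::nat. apf_queries lam \<epsilon> adj \<sigma> U = enat m \<and>
            real m \<le> query_constant lam \<Delta> C
              * (1 / \<epsilon>) powr ((2 * (1 + sqrt lam) + 4) * sqrt (real \<Delta> + 2) * ln (real \<Delta> + 2))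
              * (2 + ln (1 / \<epsilon>)))"
    if "0 < \<epsilon> \<and> \<epsilon> < 1 \<and> 1 \<le> n \<and> multigraph n adj \<and> max_degree_le n adj \<Delta>" for \<epsilon> n adj
  proof (intro conjI ballI)
    from that have eps: "0 < \<epsilon>" "\<epsilon> < 1" and n: "1 \<le> n"
      and mg: "multigraph n adj" and md: "max_degree_le n adj \<Delta>" by auto
    show "measure_pmf.prob (apf_run lam \<epsilon> C n)
        {(\<sigma>, U). \<bar>apf_output lam \<epsilon> C n adj \<sigma> U - ln (Z n adj lam)\<bar> \<le> \<epsilon> * real n} \<ge> 2/3"
      by (rule apf_output_accurate[OF lam mg md n eps C])
    fix p assume p: "p \<in> set_pmf (apf_run lam \<epsilon> C n)"
    obtain \<sigma> U where p_eq: "p = (\<sigma>, U)" by (cases p)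
    obtain m where "apf_queries lam \<epsilon> adj \<sigma> U = enat m"
      "real m \<le> real (num_samples C \<epsilon>) * (real (depth_bound lam \<Delta> \<epsilon>) * (real \<Delta> + 2) ^ depth_bound lam \<Delta> \<epsilon>)"
      using apf_queries_le[OF lam mg md n eps p[unfolded p_eq]] by blast
    with queries_total_le[OF lam C(1) eps, of \<Delta>]
    show "case p of (\<sigma>, U) \<Rightarrow> \<exists>m::nat. apf_queries lam \<epsilon> adj \<sigma> U = enat m \<and>
        real m \<le> query_constant lam \<Delta> C
          * (1 / \<epsilon>) powr ((2 * (1 + sqrt lam) + 4) * sqrt (real \<Delta> + 2) * ln (real \<Delta> + 2))
          * (2 + ln (1 / \<epsilon>))"
      unfolding p_eq by auto
  qed
  then show ?thesis using C(1) by blast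
qed

theorem theorem1:
  fixes lam :: real
  assumes "lam > 0"
  shows "\<exists>(a::real) (k::nat). \<forall>\<Delta>::nat. \<exists>(C::real) (K::real). C > 0 \<and>
    (\<forall>(\<epsilon>::real) (n::nat) (adj :: nat \<Rightarrow> nat list).
       0 < \<epsilon> \<and> \<epsilon> < 1 \<and> 1 \<le> n \<and> multigraph n adj \<and> max_degree_le n adj \<Delta> \<longrightarrow>
       measure_pmf.prob (apf_run lam \<epsilon> C n)
          {(\<sigma>, U). \<bar>apf_output lam \<epsilon> C n adj \<sigma> U - ln (Z n adj lam)\<bar> \<le> \<epsilon> * real n} \<ge> 2/3 \<and>
       (\<forall>(\<sigma>, U) \<in> set_pmf (apf_run lam \<epsilon> C n).
          \<exists>m::nat. apf_queries lam \<epsilon> adj \<sigma> U = enat m \<and>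
            real m \<le> K * (1 / \<epsilon>) powr (a * sqrt (real \<Delta> + 2) * (ln (real \<Delta> + 2)) ^ k)
                          * (2 + ln (1 / \<epsilon>)) ^ k))"
  by (rule exI[of _ "2 * (1 + sqrt lam) + 4"], rule exI[of _ "1::nat"], unfold power_one_right,
      rule allI, rule apf_guarantee[OF assms])

end
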